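(* Each of the following graphs is geodesic-transitive: the Hamming graph $H(k,m)$ ($m\ge2$), the halved $k$-cube $\tfrac12 H(k,2)$, the folded $k$-cube $\bar H(k,2)$, and (for $k$ even) the halved folded $k$-cube $\tfrac12\bar H(k,2)$.
   Context: $H(k,m)$ has vertex set $\{0,1,\dots,m-1\}^k$, two $k$-tuples adjacent iff they differ in exactly one coordinate; $H(k,2)$ is the $k$-cube. The halved $k$-cube is the graph induced by the distance-$2$ graph of $H(k,2)$ on one of its two bipartition classes. The folded $k$-cube is obtained by identifying each vertex $x$ of $H(k,2)$ with its complement $x+(1,\dots,1)$, two classes adjacent iff they contain adjacent vertices. For $k$ even the folded $k$-cube is bipartite and the halved folded $k$-cube is the graph induced by its distance-$2$ graph on one bipartition class. A geodesic of length $\ell$ is a vertex sequence $(v_0,\dots,v_\ell)$ with consecutive vertices adjacent and $d(v_0,v_\ell)=\ell$; a graph is geodesic-transitive if its automorphism group is transitive on geodesics of each length. *)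

theory Defs
  imports Main
begin

definition walk :: "'a set \<Rightarrow> ('a \<Rightarrow> 'a \<Rightarrow> bool) \<Rightarrow> 'a list \<Rightarrow> bool" where
  "walk V E p \<longleftrightarrow> p \<noteq> [] \<and> set p \<subseteq> V \<and>
     (\<forall>i. Suc i < length p \<longrightarrow> E (p ! i) (p ! Suc i))"

definition gdist :: "'a set \<Rightarrow> ('a \<Rightarrow> 'a \<Rightarrow> bool) \<Rightarrow> 'a \<Rightarrow> 'a \<Rightarrow> nat" where
  "gdist V E u v = (LEAST n. \<exists>p. walk V E p \<and> hd p = u \<and> last p = v \<and> length p = Suc n)"

definition geodesic :: "'a set \<Rightarrow> ('a \<Rightarrow> 'a \<Rightarrow> bool) \<Rightarrow> 'a list \<Rightarrow> bool" where
  "geodesic V E p \<longleftrightarrow> walk V E p \<and> gdist V E (hd p) (last p) = length p - 1"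

definition graph_automorphism :: "'a set \<Rightarrow> ('a \<Rightarrow> 'a \<Rightarrow> bool) \<Rightarrow> ('a \<Rightarrow> 'a) \<Rightarrow> bool" where
  "graph_automorphism V E \<sigma> \<longleftrightarrow> bij_betw \<sigma> V V \<and>
     (\<forall>u\<in>V. \<forall>v\<in>V. E u v \<longleftrightarrow> E (\<sigma> u) (\<sigma> v))"

definition geodesic_transitive :: "'a set \<Rightarrow> ('a \<Rightarrow> 'a \<Rightarrow> bool) \<Rightarrow> bool" where
  "geodesic_transitive V E \<longleftrightarrow>
     (\<forall>p q. geodesic V E p \<and> geodesic V E q \<and> length p = length q \<longrightarrow>
        (\<exists>\<sigma>. graph_automorphism V E \<sigma> \<and> map \<sigma> p = q))"

definition hamming_vertices :: "nat \<Rightarrow> nat \<Rightarrow> nat list set" where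
  "hamming_vertices k m = {x. length x = k \<and> set x \<subseteq> {..<m}}"

definition hamming_adj :: "nat list \<Rightarrow> nat list \<Rightarrow> bool" where
  "hamming_adj x y \<longleftrightarrow> length x = length y \<and> card {i. i < length x \<and> x ! i \<noteq> y ! i} = 1"

definition weight :: "nat list \<Rightarrow> nat" where
  "weight x = card {i. i < length x \<and> x ! i = 1}"

definition halved_cube_vertices :: "nat \<Rightarrow> nat list set" where
  "halved_cube_vertices k = {x \<in> hamming_vertices k 2. even (weight x)}"

definition halved_cube_adj :: "nat \<Rightarrow> nat list \<Rightarrow> nat list \<Rightarrow> bool" where
  "halved_cube_adj k x y \<longleftrightarrow> gdist (hamming_vertices k 2) hamming_adj x y = 2"

definition complement :: "nat list \<Rightarrow> nat list" where
  "complement x = map (\<lambda>a. 1 - a) x"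

definition fold_class :: "nat list \<Rightarrow> nat list set" where
  "fold_class x = {x, complement x}"

definition folded_cube_vertices :: "nat \<Rightarrow> nat list set set" where
  "folded_cube_vertices k = fold_class ` hamming_vertices k 2"

definition folded_cube_adj :: "nat list set \<Rightarrow> nat list set \<Rightarrow> bool" where
  "folded_cube_adj A B \<longleftrightarrow> A \<noteq> B \<and> (\<exists>x\<in>A. \<exists>y\<in>B. hamming_adj x y)"

definition halved_folded_cube_vertices :: "nat \<Rightarrow> nat list set set" where
  "halved_folded_cube_vertices k = {A \<in> folded_cube_vertices k. \<exists>x\<in>A. even (weight x)}"

definition halved_folded_cube_adj :: "nat \<Rightarrow> nat list set \<Rightarrow> nat list set \<Rightarrow> bool" where
  "halved_folded_cube_adj k A B \<longleftrightarrow> gdist (folded_cube_vertices k) folded_cube_adj A B = 2"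

end

theory Submission
  imports Defs "HOL-Combinatorics.Transposition"
begin

text \<open>
  The Hamming graph and the halved cube live on a set \<open>V\<close> of words on which graph distance is
  Hamming distance divided by \<open>s = 1\<close> resp. \<open>s = 2\<close>, and \<open>V\<close> is preserved by every automorphism
  of \<open>H(k,m)\<close> that maps one of its vertices into \<open>V\<close>.  Geodesics are matched one vertex at a
  time.  Let \<open>p @ [a]\<close> and \<open>p @ [b]\<close> be geodesics from \<open>x0\<close>, let \<open>y\<close> be the last vertex of \<open>p\<close>
  and \<open>D\<close> the set of coordinates where \<open>x0\<close> and \<open>y\<close> differ.  Every vertex of \<open>p\<close> agrees with
  \<open>x0\<close> outside \<open>D\<close>, while \<open>a\<close> and \<open>b\<close> agree with \<open>y\<close> on \<open>D\<close> and differ from \<open>x0\<close> in exactly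
  \<open>s\<close> coordinates outside \<open>D\<close>.  An automorphism that fixes the coordinates in \<open>D\<close>, permutes the
  others and relabels symbols so as to fix \<open>x0\<close> therefore fixes \<open>p\<close> and maps \<open>a\<close> to \<open>b\<close>.

  The folded and the halved folded cube are the quotients of the cube and of the halved cube by
  complementation, which commutes with every automorphism of the cube.  Geodesics of these
  quotients lift to geodesics upstairs, so geodesic transitivity descends.
\<close>

section \<open>Walks, distance and automorphisms\<close>

lemma walk_Cons:
  "walk V E (a # p) \<longleftrightarrow> a \<in> V \<and> (p = [] \<or> E a (hd p) \<and> walk V E p)"
proof (cases p)
  case (Cons b q)
  have "(\<forall>i. Suc i < length (a # p) \<longrightarrow> E ((a # p) ! i) ((a # p) ! Suc i)) \<longleftrightarrow>
        E a b \<and> (\<forall>i. Suc i < length p \<longrightarrow> E (p ! i) (p ! Suc i))"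
    using Cons by (auto simp: less_Suc_eq_0_disj)
  then show ?thesis using Cons by (auto simp: walk_def)
qed (simp add: walk_def)

lemma walk_snoc:
  "walk V E (p @ [a]) \<longleftrightarrow> a \<in> V \<and> (p = [] \<or> walk V E p \<and> E (last p) a)"
  by (induction p) (auto simp: walk_Cons)

lemma walk_singleton [simp]: "walk V E [a] \<longleftrightarrow> a \<in> V"
  by (simp add: walk_def)

lemma walk_not_Nil: "walk V E p \<Longrightarrow> p \<noteq> []"
  by (simp add: walk_def)

lemma walk_subset: "walk V E p \<Longrightarrow> set p \<subseteq> V"
  by (simp add: walk_def)

lemma walk_take: "walk V E p \<Longrightarrow> 0 < n \<Longrightarrow> walk V E (take n p)"
  unfolding walk_def by (auto dest: in_set_takeD)

lemma walk_drop: "walk V E p \<Longrightarrow> n < length p \<Longrightarrow> walk V E (drop n p)"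
  unfolding walk_def by (auto dest: in_set_dropD simp: add.commute[of n])

lemma gdist_le_length: "walk V E p \<Longrightarrow> gdist V E (hd p) (last p) \<le> length p - 1"
  unfolding gdist_def by (rule Least_le) (auto simp: walk_def)

lemma shortest_walk_exists:
  assumes "walk V E p" "hd p = u" "last p = v"
  shows "\<exists>q. walk V E q \<and> hd q = u \<and> last q = v \<and> length q = Suc (gdist V E u v)"
proof -
  have "\<exists>n q. walk V E q \<and> hd q = u \<and> last q = v \<and> length q = Suc n"
    using assms by (intro exI[of _ "length p - 1"] exI[of _ p]) (auto simp: walk_def)
  then show ?thesis unfolding gdist_def by (rule LeastI_ex)
qed

lemma geodesic_butlast:
  assumes g: "geodesic V E (p @ [a])" and "p \<noteq> []"
  shows "geodesic V E p"
proof -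
  have wp: "walk V E p" and "a \<in> V" "E (last p) a"
    using g \<open>p \<noteq> []\<close> by (auto simp: geodesic_def walk_snoc)
  obtain q where q: "walk V E q" "hd q = hd p" "last q = last p"
    "length q = Suc (gdist V E (hd p) (last p))"
    using shortest_walk_exists[OF wp refl refl] by blast
  then have "walk V E (q @ [a])"
    using \<open>a \<in> V\<close> \<open>E (last p) a\<close> by (simp add: walk_snoc)
  then have "gdist V E (hd p) a \<le> Suc (gdist V E (hd p) (last p))"
    using gdist_le_length[of V E "q @ [a]"] q walk_not_Nil by fastforce
  moreover have "gdist V E (hd p) a = length p"
    using g \<open>p \<noteq> []\<close> by (simp add: geodesic_def)
  ultimately show ?thesis
    using gdist_le_length[OF wp] \<open>p \<noteq> []\<close> wp by (simp add: geodesic_def)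
qed

lemma geodesic_gdist_split:
  assumes tri: "\<And>u v w. u \<in> V \<Longrightarrow> v \<in> V \<Longrightarrow> w \<in> V \<Longrightarrow>
                 gdist V E u w \<le> gdist V E u v + gdist V E v w"
    and g: "geodesic V E p" and z: "z \<in> set p"
  shows "gdist V E (hd p) z + gdist V E z (last p) = gdist V E (hd p) (last p)"
proof -
  have w: "walk V E p" using g by (simp add: geodesic_def)
  obtain j where j: "j < length p" "p ! j = z" using z by (meson in_set_conv_nth)
  have "hd (take (Suc j) p) = hd p" using walk_not_Nil[OF w] by simp
  moreover have "last (take (Suc j) p) = z" using j by (simp add: take_Suc_conv_app_nth)
  ultimately have "gdist V E (hd p) z \<le> j"
    using gdist_le_length[OF walk_take[OF w, of "Suc j"]] j by simp
  moreover have "gdist V E z (last p) \<le> length p - 1 - j"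
    using gdist_le_length[OF walk_drop[OF w j(1)]] j by (simp add: hd_drop_conv_nth)
  moreover have "gdist V E (hd p) (last p) = length p - 1"
    using g by (simp add: geodesic_def)
  moreover have "hd p \<in> V" "last p \<in> V" "z \<in> V"
    using walk_subset[OF w] walk_not_Nil[OF w] z by auto
  ultimately show ?thesis using tri[of "hd p" z "last p"] j(1) by linarith
qed

lemma walk_by_descent:
  assumes refl: "\<And>u. u \<in> V \<Longrightarrow> d u u = 0"
    and step: "\<And>u v. u \<in> V \<Longrightarrow> v \<in> V \<Longrightarrow> u \<noteq> v \<Longrightarrow> \<exists>w\<in>V. E u w \<and> Suc (d w v) = d u v"
    and "u \<in> V" "v \<in> V"
  shows "\<exists>p. walk V E p \<and> hd p = u \<and> last p = v \<and> length p = Suc (d u v)"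
  using \<open>u \<in> V\<close>
proof (induction "d u v" arbitrary: u)
  case 0
  then have "u = v" using step[OF _ \<open>v \<in> V\<close>] by fastforce
  then show ?case using 0 by (intro exI[of _ "[u]"]) (simp add: walk_def)
next
  case (Suc n)
  then have "u \<noteq> v" using refl by force
  then obtain w where w: "w \<in> V" "E u w" "Suc (d w v) = d u v"
    using step Suc.prems \<open>v \<in> V\<close> by blast
  then obtain p where "walk V E p" "hd p = w" "last p = v" "length p = Suc (d w v)"
    using Suc.hyps by force
  then show ?case
    using w Suc.prems walk_not_Nil by (intro exI[of _ "u # p"]) (auto simp: walk_Cons)
qed

lemma gdist_eqI:
  assumes refl: "\<And>u. u \<in> V \<Longrightarrow> d u u = 0"
    and tri: "\<And>u v w. u \<in> V \<Longrightarrow> v \<in> V \<Longrightarrow> w \<in> V \<Longrightarrow> d u w \<le> d u v + d v w"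
    and edge: "\<And>u v. u \<in> V \<Longrightarrow> v \<in> V \<Longrightarrow> E u v \<Longrightarrow> d u v \<le> 1"
    and step: "\<And>u v. u \<in> V \<Longrightarrow> v \<in> V \<Longrightarrow> u \<noteq> v \<Longrightarrow> \<exists>w\<in>V. E u w \<and> Suc (d w v) = d u v"
    and "u \<in> V" "v \<in> V"
  shows "gdist V E u v = d u v"
proof -
  have walk_le: "d (hd p) (last p) \<le> length p - 1" if "walk V E p" for p
    using that
  proof (induction p)
    case (Cons a p)
    show ?case
    proof (cases p)
      case Nil then show ?thesis using Cons.prems refl by (simp add: walk_Cons)
    next
      case (Cons b q)
      then have "a \<in> V" "E a b" "walk V E p" "b \<in> V" "last p \<in> V"
        using \<open>walk V E (a # p)\<close> walk_subset by (fastforce simp: walk_Cons)+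
      then show ?thesis
        using Cons Cons.IH edge tri[of a b "last p"] by fastforce
    qed
  qed (simp add: walk_def)
  show ?thesis
    unfolding gdist_def
  proof (rule Least_equality)
    show "\<exists>p. walk V E p \<and> hd p = u \<and> last p = v \<and> length p = Suc (d u v)"
      using refl step \<open>u \<in> V\<close> \<open>v \<in> V\<close> by (rule walk_by_descent)
  next
    fix n assume "\<exists>p. walk V E p \<and> hd p = u \<and> last p = v \<and> length p = Suc n"
    then show "d u v \<le> n" using walk_le by fastforce
  qed
qed

lemma graph_automorphism_in:
  "graph_automorphism V E \<sigma> \<Longrightarrow> x \<in> V \<Longrightarrow> \<sigma> x \<in> V"
  unfolding graph_automorphism_def by (meson bij_betwE)

lemma graph_automorphism_comp:
  "graph_automorphism V E \<sigma> \<Longrightarrow> graph_automorphism V E \<tau> \<Longrightarrow> graph_automorphism V E (\<tau> \<circ> \<sigma>)"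
  unfolding graph_automorphism_def by (auto intro: bij_betw_trans) (meson bij_betwE)+

lemma graph_automorphism_inv_into:
  assumes a: "graph_automorphism V E \<sigma>"
  shows "graph_automorphism V E (inv_into V \<sigma>)"
proof -
  have b: "bij_betw \<sigma> V V" using a by (simp add: graph_automorphism_def)
  have bi: "bij_betw (inv_into V \<sigma>) V V" using bij_betw_inv_into[OF b] .
  show ?thesis unfolding graph_automorphism_def
  proof (intro conjI ballI bi)
    fix u v assume "u \<in> V" "v \<in> V"
    then show "E u v \<longleftrightarrow> E (inv_into V \<sigma> u) (inv_into V \<sigma> v)"
      using a bij_betwE[OF bi] f_inv_into_f[of _ \<sigma> V] bij_betw_imp_surj_on[OF b]
      unfolding graph_automorphism_def by metis
  qed
qed

lemma walk_map_automorphism: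
  assumes "graph_automorphism V E \<sigma>" "walk V E p"
  shows "walk V E (map \<sigma> p)"
  using assms(2)
proof (induction p)
  case (Cons a p)
  then show ?case
    using assms(1) graph_automorphism_in[OF assms(1)] walk_subset[of V E p]
    by (cases p) (auto simp: walk_Cons graph_automorphism_def)
qed (simp add: walk_def)

lemma gdist_automorphism:
  assumes a: "graph_automorphism V E \<sigma>" and "u \<in> V" "v \<in> V"
  shows "gdist V E (\<sigma> u) (\<sigma> v) = gdist V E u v"
proof -
  have inv: "inv_into V \<sigma> (\<sigma> x) = x" if "x \<in> V" for x
    using a that by (simp add: graph_automorphism_def bij_betw_def)
  have transfer: "walk V E (map \<tau> q) \<and> hd (map \<tau> q) = \<tau> (hd q) \<and> last (map \<tau> q) = \<tau> (last q)
      \<and> length (map \<tau> q) = length q" if "graph_automorphism V E \<tau>" "walk V E q" for \<tau> q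
    using walk_map_automorphism[OF that] walk_not_Nil[OF that(2)] by (simp add: hd_map last_map)
  have "(\<exists>q. walk V E q \<and> hd q = \<sigma> u \<and> last q = \<sigma> v \<and> length q = Suc n) \<longleftrightarrow>
        (\<exists>q. walk V E q \<and> hd q = u \<and> last q = v \<and> length q = Suc n)" for n
    using transfer[OF a] transfer[OF graph_automorphism_inv_into[OF a]] inv assms(2,3)
    by metis
  then show ?thesis unfolding gdist_def by simp
qed

lemma geodesic_map_automorphism:
  assumes a: "graph_automorphism V E \<sigma>" and g: "geodesic V E p"
  shows "geodesic V E (map \<sigma> p)"
proof -
  have w: "walk V E p" using g by (simp add: geodesic_def)
  then have "p \<noteq> []" "hd p \<in> V" "last p \<in> V" using walk_not_Nil walk_subset by fastforce+
  then show ?thesis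
    using g walk_map_automorphism[OF a w] gdist_automorphism[OF a]
    by (simp add: geodesic_def hd_map last_map)
qed

lemma graph_automorphism_gdist_graph:
  assumes a: "graph_automorphism V E \<sigma>" and "W \<subseteq> V" "\<sigma> ` W = W"
  shows "graph_automorphism W (\<lambda>x y. gdist V E x y = n) \<sigma>"
proof -
  have "inj_on \<sigma> W"
    using a \<open>W \<subseteq> V\<close> by (auto simp: graph_automorphism_def bij_betw_def intro: inj_on_subset)
  moreover have "gdist V E (\<sigma> u) (\<sigma> v) = gdist V E u v" if "u \<in> W" "v \<in> W" for u v
    using gdist_automorphism[OF a] that \<open>W \<subseteq> V\<close> by blast
  ultimately show ?thesis
    using \<open>\<sigma> ` W = W\<close> by (simp add: graph_automorphism_def bij_betw_def)
qed

definition geodesic_transitive_by :: "('a \<Rightarrow> 'a) set \<Rightarrow> 'a set \<Rightarrow> ('a \<Rightarrow> 'a \<Rightarrow> bool) \<Rightarrow> bool" where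
  "geodesic_transitive_by C V E \<longleftrightarrow>
     (\<forall>p q. geodesic V E p \<and> geodesic V E q \<and> length p = length q \<longrightarrow> (\<exists>\<sigma>\<in>C. map \<sigma> p = q))"

lemma geodesic_transitiveI:
  assumes "geodesic_transitive_by C V E" "\<And>\<sigma>. \<sigma> \<in> C \<Longrightarrow> graph_automorphism V E \<sigma>"
  shows "geodesic_transitive V E"
  using assms unfolding geodesic_transitive_def geodesic_transitive_by_def by blast

lemma geodesic_transitive_byI:
  assumes aut: "\<And>\<sigma>. \<sigma> \<in> C \<Longrightarrow> graph_automorphism V E \<sigma>"
    and comp: "\<And>\<sigma> \<tau>. \<sigma> \<in> C \<Longrightarrow> \<tau> \<in> C \<Longrightarrow> \<tau> \<circ> \<sigma> \<in> C"
    and transitive: "\<And>u v. u \<in> V \<Longrightarrow> v \<in> V \<Longrightarrow> \<exists>\<sigma>\<in>C. \<sigma> u = v"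
    and extend: "\<And>p a b. p \<noteq> [] \<Longrightarrow> geodesic V E (p @ [a]) \<Longrightarrow> geodesic V E (p @ [b]) \<Longrightarrow>
                   \<exists>\<tau>\<in>C. (\<forall>x\<in>set p. \<tau> x = x) \<and> \<tau> a = b"
  shows "geodesic_transitive_by C V E"
proof -
  have "\<exists>\<sigma>\<in>C. map \<sigma> p = q"
    if "geodesic V E p" "geodesic V E q" "length p = length q" for p q
    using that
  proof (induction p arbitrary: q rule: rev_induct)
    case Nil then show ?case by (simp add: geodesic_def walk_def)
  next
    case (snoc x p)
    obtain q' y where q: "q = q' @ [y]" and "length q' = length p"
      using snoc.prems(3) by (cases q rule: rev_exhaust) auto
    show ?case
    proof (cases "p = []")
      case True
      then have "q' = []" using \<open>length q' = length p\<close> by simp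
      then have "x \<in> V" "y \<in> V" using snoc.prems q True by (auto simp: geodesic_def)
      then show ?thesis using transitive True q \<open>q' = []\<close> by fastforce
    next
      case False
      then have "q' \<noteq> []" using \<open>length q' = length p\<close> by auto
      obtain \<sigma> where \<sigma>: "\<sigma> \<in> C" "map \<sigma> p = q'"
        using snoc.IH geodesic_butlast snoc.prems q False \<open>q' \<noteq> []\<close> \<open>length q' = length p\<close>
        by metis
      have "geodesic V E (q' @ [\<sigma> x])"
        using geodesic_map_automorphism[OF aut[OF \<sigma>(1)] snoc.prems(1)] \<sigma>(2) by simp
      then obtain \<tau> where \<tau>: "\<tau> \<in> C" "\<forall>z\<in>set q'. \<tau> z = z" "\<tau> (\<sigma> x) = y"
        using extend \<open>q' \<noteq> []\<close> snoc.prems(2) q by blast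
      have "map (\<tau> \<circ> \<sigma>) (p @ [x]) = q"
        using \<sigma>(2) \<tau>(2,3) q by (simp flip: map_map add: map_idI)
      then show ?thesis using comp[OF \<sigma>(1) \<tau>(1)] by blast
    qed
  qed
  then show ?thesis unfolding geodesic_transitive_by_def by blast
qed

section \<open>Quotient graphs\<close>

locale graph_quotient =
  fixes VA :: "'a set" and EA :: "'a \<Rightarrow> 'a \<Rightarrow> bool"
    and VB :: "'a set set" and EB :: "'a set \<Rightarrow> 'a set \<Rightarrow> bool"
    and cls :: "'a \<Rightarrow> 'a set"
  assumes cls_self: "x \<in> VA \<Longrightarrow> x \<in> cls x"
    and cls_eq: "x \<in> VA \<Longrightarrow> y \<in> cls x \<Longrightarrow> y \<in> VA \<and> cls y = cls x"
    and VB_eq: "VB = cls ` VA"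
    and edge_project: "u \<in> VA \<Longrightarrow> v \<in> VA \<Longrightarrow> EA u v \<Longrightarrow> EB (cls u) (cls v) \<or> cls u = cls v"
    and edge_lift: "x \<in> VA \<Longrightarrow> B \<in> VB \<Longrightarrow> EB (cls x) B \<Longrightarrow> \<exists>y\<in>B. EA x y"
begin

lemma class_of_member:
  assumes "A \<in> VB" "x \<in> A"
  shows "x \<in> VA \<and> A = cls x"
proof -
  obtain x' where "x' \<in> VA" "A = cls x'" using assms(1) VB_eq by blast
  then show ?thesis using cls_eq assms(2) by metis
qed

lemma walk_project:
  "walk VA EA p \<Longrightarrow>
     \<exists>q. walk VB EB q \<and> hd q = cls (hd p) \<and> last q = cls (last p) \<and> length q \<le> length p"
proof (induction p)
  case (Cons a p)
  show ?case
  proof (cases p)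
    case Nil
    then show ?thesis using Cons.prems VB_eq by (intro exI[of _ "[cls a]"]) simp
  next
    case (Cons b r)
    have "a \<in> VA" "EA a b" "walk VA EA p" "b \<in> VA"
      using Cons \<open>walk VA EA (a # p)\<close> walk_subset by (fastforce simp: walk_Cons)+
    obtain q where q: "walk VB EB q" "hd q = cls b" "last q = cls (last p)"
      "length q \<le> length p"
      using Cons.IH \<open>walk VA EA p\<close> Cons by auto
    show ?thesis
    proof (cases "cls a = cls b")
      case True
      then show ?thesis using q Cons by (intro exI[of _ q]) simp
    next
      case False
      then have "EB (cls a) (cls b)" using edge_project \<open>a \<in> VA\<close> \<open>b \<in> VA\<close> \<open>EA a b\<close> by blast
      then have "walk VB EB (cls a # q)"
        using q walk_not_Nil[OF q(1)] VB_eq \<open>a \<in> VA\<close> by (simp add: walk_Cons)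
      then show ?thesis using q Cons walk_not_Nil[OF q(1)] by (intro exI[of _ "cls a # q"]) simp
    qed
  qed
qed (simp add: walk_def)

lemma gdist_project_le:
  assumes "walk VA EA p" "hd p = u" "last p = v"
  shows "gdist VB EB (cls u) (cls v) \<le> gdist VA EA u v"
proof -
  obtain p' where "walk VA EA p'" "hd p' = u" "last p' = v" "length p' = Suc (gdist VA EA u v)"
    using shortest_walk_exists[OF assms] by blast
  then obtain q where "walk VB EB q" "hd q = cls u" "last q = cls v" "length q \<le> length p'"
    using walk_project by blast
  then show ?thesis
    using gdist_le_length[of VB EB q] \<open>length p' = Suc (gdist VA EA u v)\<close> by simp
qed

lemma walk_lift:
  "walk VB EB P \<Longrightarrow> x \<in> hd P \<Longrightarrow> \<exists>p. walk VA EA p \<and> hd p = x \<and> map cls p = P"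
proof (induction P arbitrary: x)
  case (Cons A P)
  then have "A \<in> VB" by (simp add: walk_Cons)
  then have x: "x \<in> VA" "A = cls x" using class_of_member Cons.prems(2) by auto
  show ?case
  proof (cases P)
    case Nil
    then show ?thesis using x by (intro exI[of _ "[x]"]) simp
  next
    case (Cons B Q)
    then have "EB A B" "walk VB EB P" "B \<in> VB"
      using \<open>walk VB EB (A # P)\<close> walk_subset by (fastforce simp: walk_Cons)+
    then obtain y where "y \<in> B" "EA x y" using edge_lift x by blast
    moreover have "y \<in> hd P" using Cons \<open>y \<in> B\<close> by simp
    ultimately obtain p where "walk VA EA p" "hd p = y" "map cls p = P"
      using Cons.IH \<open>walk VB EB P\<close> by blast
    then show ?thesis
      using x \<open>EA x y\<close> walk_not_Nil by (intro exI[of _ "x # p"]) (auto simp: walk_Cons)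
  qed
qed (simp add: walk_def)

lemma geodesic_lift:
  assumes g: "geodesic VB EB P"
  shows "\<exists>p. geodesic VA EA p \<and> map cls p = P"
proof -
  have w: "walk VB EB P" using g by (simp add: geodesic_def)
  then have "hd P \<in> VB" using walk_not_Nil walk_subset by fastforce
  then obtain x where "x \<in> VA" "hd P = cls x" using VB_eq by blast
  then obtain p where p: "walk VA EA p" "map cls p = P"
    using walk_lift[OF w] cls_self[OF \<open>x \<in> VA\<close>] by auto
  have "p \<noteq> []" using walk_not_Nil[OF p(1)] .
  then have "cls (hd p) = hd P" "cls (last p) = last P" "length p = length P"
    using p(2) by (auto simp flip: hd_map last_map)
  then have "gdist VA EA (hd p) (last p) = length p - 1"
    using g gdist_le_length[OF p(1)] gdist_project_le[OF p(1) refl refl]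
    by (simp add: geodesic_def)
  then show ?thesis using p by (auto simp: geodesic_def)
qed

lemma gdist_quotient_attained:
  assumes "walk VA EA p" "hd p = x" "last p = y"
  shows "\<exists>y'\<in>cls y. gdist VA EA x y' = gdist VB EB (cls x) (cls y)"
proof -
  obtain Q where Q: "walk VB EB Q" "hd Q = cls x" "last Q = cls y"
    using walk_project[OF assms(1)] assms by blast
  obtain P where P: "walk VB EB P" "hd P = cls x" "last P = cls y"
    "length P = Suc (gdist VB EB (cls x) (cls y))"
    using shortest_walk_exists[OF Q] by blast
  have "x \<in> VA"
    using walk_subset[OF assms(1)] hd_in_set[OF walk_not_Nil[OF assms(1)]] assms(2) by blast
  then obtain p' where p': "walk VA EA p'" "hd p' = x" "map cls p' = P"
    using walk_lift[OF P(1)] P(2) cls_self[OF \<open>x \<in> VA\<close>] by auto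
  have "p' \<noteq> []" using walk_not_Nil[OF p'(1)] .
  then have cls_last: "cls (last p') = cls y" and "length p' = length P"
    using p'(3) P(3) by (auto simp flip: last_map)
  then have "gdist VA EA x (last p') \<le> gdist VB EB (cls x) (cls y)"
    using gdist_le_length[OF p'(1)] p'(2) P(4) by simp
  moreover have "gdist VB EB (cls x) (cls y) \<le> gdist VA EA x (last p')"
    using gdist_project_le[OF p'(1) p'(2) refl] cls_last by simp
  moreover have "last p' \<in> cls y"
    using cls_self[of "last p'"] cls_last walk_subset[OF p'(1)] last_in_set[OF \<open>p' \<noteq> []\<close>]
    by auto
  ultimately show ?thesis by (intro bexI[of _ "last p'"]) auto
qed

theorem geodesic_transitive_quotient:
  assumes gt: "geodesic_transitive_by C VA EA"
    and induced: "\<And>\<sigma>. \<sigma> \<in> C \<Longrightarrow> graph_automorphism VB EB (image \<sigma>)"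
    and compat: "\<And>\<sigma> x. \<sigma> \<in> C \<Longrightarrow> x \<in> VA \<Longrightarrow> \<sigma> ` cls x = cls (\<sigma> x)"
  shows "geodesic_transitive VB EB"
  unfolding geodesic_transitive_def
proof (intro allI impI)
  fix P Q assume PQ: "geodesic VB EB P \<and> geodesic VB EB Q \<and> length P = length Q"
  obtain p where p: "geodesic VA EA p" "map cls p = P" using geodesic_lift PQ by blast
  obtain q where q: "geodesic VA EA q" "map cls q = Q" using geodesic_lift PQ by blast
  have "length p = length q" using p(2) q(2) PQ by auto
  then obtain \<sigma> where "\<sigma> \<in> C" "map \<sigma> p = q"
    using gt p(1) q(1) unfolding geodesic_transitive_by_def by blast
  moreover have "set p \<subseteq> VA" using p(1) walk_subset by (simp add: geodesic_def walk_def)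
  ultimately have "\<forall>x\<in>set p. \<sigma> ` cls x = cls (\<sigma> x)" using compat by blast
  then have "map (image \<sigma>) P = Q"
    using p(2) q(2) \<open>map \<sigma> p = q\<close> by auto
  then show "\<exists>\<sigma>. graph_automorphism VB EB \<sigma> \<and> map \<sigma> P = Q"
    using induced[OF \<open>\<sigma> \<in> C\<close>] by (intro exI[of _ "image \<sigma>"]) simp
qed

end

section \<open>Hamming distance\<close>

definition diff_coords :: "nat list \<Rightarrow> nat list \<Rightarrow> nat set" where
  "diff_coords x y = {i. i < length x \<and> x ! i \<noteq> y ! i}"

definition hamming_dist :: "nat list \<Rightarrow> nat list \<Rightarrow> nat" where
  "hamming_dist x y = card (diff_coords x y)"

lemma hamming_vertices_iff: "x \<in> hamming_vertices k m \<longleftrightarrow> length x = k \<and> (\<forall>i<k. x ! i < m)"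
  unfolding hamming_vertices_def by (auto simp: subset_iff in_set_conv_nth)

lemma finite_hamming_vertices: "finite (hamming_vertices k m)"
proof -
  have "hamming_vertices k m = {xs. set xs \<subseteq> {..<m} \<and> length xs = k}"
    unfolding hamming_vertices_def by auto
  then show ?thesis using finite_lists_length_eq[of "{..<m}" k] by simp
qed

lemma diff_coords_subset: "diff_coords x y \<subseteq> {..<length x}"
  unfolding diff_coords_def by auto

lemma finite_diff_coords [simp]: "finite (diff_coords x y)"
  using diff_coords_subset finite_subset by blast

lemma hamming_adj_iff: "hamming_adj x y \<longleftrightarrow> length x = length y \<and> hamming_dist x y = 1"
  unfolding hamming_adj_def hamming_dist_def diff_coords_def by simp

lemma hamming_dist_self [simp]: "hamming_dist x x = 0"
  unfolding hamming_dist_def diff_coords_def by simp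

lemma hamming_dist_eq_0_iff: "length x = length y \<Longrightarrow> hamming_dist x y = 0 \<longleftrightarrow> x = y"
  unfolding hamming_dist_def diff_coords_def by (auto intro: nth_equalityI)

lemma hamming_dist_triangle:
  assumes "length x = length y" "length y = length z"
  shows "hamming_dist x z \<le> hamming_dist x y + hamming_dist y z"
proof -
  have "diff_coords x z \<subseteq> diff_coords x y \<union> diff_coords y z"
    using assms unfolding diff_coords_def by auto
  then have "card (diff_coords x z) \<le> card (diff_coords x y \<union> diff_coords y z)"
    by (simp add: card_mono)
  also have "\<dots> \<le> card (diff_coords x y) + card (diff_coords y z)" by (rule card_Un_le)
  finally show ?thesis unfolding hamming_dist_def .
qed

lemma hamming_dist_between:
  assumes "length x = length y" "length z = length y"
    and "hamming_dist x z + hamming_dist z y = hamming_dist x y" and "i < length x"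
  shows "z ! i = x ! i \<or> z ! i = y ! i"
proof -
  have "diff_coords x y \<subseteq> diff_coords x z \<union> diff_coords z y"
    using assms(1,2) unfolding diff_coords_def by auto
  then have "card (diff_coords x y) \<le> card (diff_coords x z \<union> diff_coords z y)"
    by (simp add: card_mono)
  moreover have "card (diff_coords x z) + card (diff_coords z y) =
      card (diff_coords x z \<union> diff_coords z y) + card (diff_coords x z \<inter> diff_coords z y)"
    by (rule card_Un_Int) simp_all
  ultimately have "diff_coords x z \<inter> diff_coords z y = {}"
    using assms(3) unfolding hamming_dist_def by simp
  then show ?thesis using assms(1,2,4) unfolding diff_coords_def by auto
qed

lemma copy_coords_exists:
  assumes "u \<in> hamming_vertices k m" "v \<in> hamming_vertices k m" "S \<subseteq> diff_coords u v"
  obtains w where "w \<in> hamming_vertices k m" "diff_coords u w = S"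
    "hamming_dist w v = hamming_dist u v - card S"
proof
  define w where "w = map (\<lambda>i. if i \<in> S then v ! i else u ! i) [0..<k]"
  have len: "length u = k" "length v = k" "length w = k"
    using assms(1,2) by (simp_all add: hamming_vertices_iff w_def)
  have S: "i \<in> S \<Longrightarrow> i < k \<and> u ! i \<noteq> v ! i" for i
    using assms(3) len unfolding diff_coords_def by auto
  have w_nth: "i < k \<Longrightarrow> w ! i = (if i \<in> S then v ! i else u ! i)" for i
    by (simp add: w_def)
  show "w \<in> hamming_vertices k m"
    using assms(1,2) by (simp add: hamming_vertices_iff w_def)
  show "diff_coords u w = S"
    using S len w_nth unfolding diff_coords_def by (auto split: if_splits)
  have "diff_coords w v = diff_coords u v - S"
    using S len w_nth unfolding diff_coords_def by (auto split: if_splits)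
  then show "hamming_dist w v = hamming_dist u v - card S"
    unfolding hamming_dist_def using assms(3) by (simp add: card_Diff_subset finite_subset)
qed

lemma hamming_descent:
  assumes uv: "u \<in> hamming_vertices k m" "v \<in> hamming_vertices k m" "u \<noteq> v"
  shows "\<exists>w\<in>hamming_vertices k m. hamming_adj u w \<and> Suc (hamming_dist w v) = hamming_dist u v"
proof -
  have "hamming_dist u v \<noteq> 0"
    using uv hamming_dist_eq_0_iff[of u v] by (auto simp: hamming_vertices_iff)
  then have "1 \<le> card (diff_coords u v)" by (simp add: hamming_dist_def Suc_le_eq card_gt_0_iff)
  then obtain S where S: "S \<subseteq> diff_coords u v" "card S = 1"
    by (rule obtain_subset_with_card_n)
  then obtain w where w: "w \<in> hamming_vertices k m" "diff_coords u w = S"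
    "hamming_dist w v = hamming_dist u v - 1"
    using copy_coords_exists[OF uv(1,2)] by metis
  moreover have "hamming_adj u w"
    using w S uv by (simp add: hamming_adj_iff hamming_dist_def hamming_vertices_iff)
  ultimately show ?thesis using \<open>hamming_dist u v \<noteq> 0\<close> by auto
qed

lemma gdist_hamming:
  assumes "x \<in> hamming_vertices k m" "y \<in> hamming_vertices k m"
  shows "gdist (hamming_vertices k m) hamming_adj x y = hamming_dist x y"
proof (rule gdist_eqI[OF _ _ _ hamming_descent assms])
  fix u v w assume "u \<in> hamming_vertices k m" "v \<in> hamming_vertices k m" "w \<in> hamming_vertices k m"
  then show "hamming_dist u w \<le> hamming_dist u v + hamming_dist v w"
    by (intro hamming_dist_triangle) (simp_all add: hamming_vertices_iff)
qed (simp_all add: hamming_adj_iff)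

lemma hamming_walk_exists:
  assumes "x \<in> hamming_vertices k m" "y \<in> hamming_vertices k m"
  shows "\<exists>p. walk (hamming_vertices k m) hamming_adj p \<and> hd p = x \<and> last p = y"
proof -
  have "\<exists>p. walk (hamming_vertices k m) hamming_adj p \<and> hd p = x \<and> last p = y
      \<and> length p = Suc (hamming_dist x y)"
    using _ hamming_descent assms by (rule walk_by_descent) simp
  then show ?thesis by blast
qed

section \<open>Automorphisms of the Hamming graph\<close>

text \<open>Elements of the wreath product \<open>Sym(m) \<wr> Sym(k)\<close>, the automorphism group of \<open>H(k,m)\<close>.\<close>
definition hamming_map :: "(nat \<Rightarrow> nat) \<Rightarrow> (nat \<Rightarrow> nat \<Rightarrow> nat) \<Rightarrow> nat list \<Rightarrow> nat list" where
  "hamming_map \<pi> g x = map (\<lambda>i. g i (x ! \<pi> i)) [0..<length x]"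

lemma length_hamming_map [simp]: "length (hamming_map \<pi> g x) = length x"
  by (simp add: hamming_map_def)

lemma nth_hamming_map [simp]: "i < length x \<Longrightarrow> hamming_map \<pi> g x ! i = g i (x ! \<pi> i)"
  by (simp add: hamming_map_def)

lemma hamming_map_automorphism:
  assumes \<pi>: "bij_betw \<pi> {..<k} {..<k}" and g: "\<And>i. i < k \<Longrightarrow> bij_betw (g i) {..<m} {..<m}"
  shows "graph_automorphism (hamming_vertices k m) hamming_adj (hamming_map \<pi> g)"
proof -
  let ?V = "hamming_vertices k m" and ?f = "hamming_map \<pi> g"
  have \<pi>k: "\<pi> i < k" if "i < k" for i using \<pi> that by (meson bij_betwE lessThan_iff)
  have gm: "g i v < m" if "i < k" "v < m" for i v
    using g[OF that(1)] that(2) by (meson bij_betwE lessThan_iff)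
  have into: "?f x \<in> ?V" if "x \<in> ?V" for x
    using that \<pi>k gm by (auto simp: hamming_vertices_iff)
  have dist: "hamming_dist (?f x) (?f y) = hamming_dist x y" if "x \<in> ?V" "y \<in> ?V" for x y
  proof -
    have "g i (x ! \<pi> i) = g i (y ! \<pi> i) \<longleftrightarrow> x ! \<pi> i = y ! \<pi> i" if "i < k" for i
      using \<open>x \<in> ?V\<close> \<open>y \<in> ?V\<close> \<pi>k[OF that] bij_betw_imp_inj_on[OF g[OF that]]
      by (auto simp: hamming_vertices_iff inj_on_def)
    then have "diff_coords (?f x) (?f y) = {i. i < k \<and> \<pi> i \<in> diff_coords x y}"
      using that \<pi>k by (auto simp: diff_coords_def hamming_vertices_iff)
    moreover have "bij_betw \<pi> {i. i < k \<and> \<pi> i \<in> diff_coords x y} (diff_coords x y)"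
    proof (rule bij_betw_subset[OF \<pi>])
      have "diff_coords x y \<subseteq> \<pi> ` {..<k}"
        using bij_betw_imp_surj_on[OF \<pi>] diff_coords_subset[of x y] \<open>x \<in> ?V\<close>
        by (simp add: hamming_vertices_iff)
      then show "\<pi> ` {i. i < k \<and> \<pi> i \<in> diff_coords x y} = diff_coords x y" by auto
    qed auto
    ultimately show ?thesis unfolding hamming_dist_def by (simp add: bij_betw_same_card)
  qed
  have "inj_on ?f ?V"
  proof (rule inj_onI)
    fix x y assume "x \<in> ?V" "y \<in> ?V" "?f x = ?f y"
    then show "x = y"
      using dist[of x y] hamming_dist_eq_0_iff[of x y] by (simp add: hamming_vertices_iff)
  qed
  moreover have "?f ` ?V = ?V"
    using endo_inj_surj[OF finite_hamming_vertices _ \<open>inj_on ?f ?V\<close>] into by blast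
  ultimately show ?thesis
    unfolding graph_automorphism_def bij_betw_def using dist by (simp add: hamming_adj_iff)
qed

lemma hamming_dist_automorphism:
  assumes "graph_automorphism (hamming_vertices k m) hamming_adj \<sigma>"
    and "x \<in> hamming_vertices k m" "y \<in> hamming_vertices k m"
  shows "hamming_dist (\<sigma> x) (\<sigma> y) = hamming_dist x y"
proof -
  have "\<sigma> x \<in> hamming_vertices k m" "\<sigma> y \<in> hamming_vertices k m"
    using graph_automorphism_in[OF assms(1)] assms(2,3) by auto
  then have "hamming_dist (\<sigma> x) (\<sigma> y) = gdist (hamming_vertices k m) hamming_adj (\<sigma> x) (\<sigma> y)"
    by (simp add: gdist_hamming)
  also have "\<dots> = hamming_dist x y"
    using gdist_automorphism[OF assms] gdist_hamming[OF assms(2,3)] by simp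
  finally show ?thesis .
qed

lemma hamming_vertex_transitive:
  assumes "u \<in> hamming_vertices k m" "v \<in> hamming_vertices k m"
  shows "\<exists>\<sigma>. graph_automorphism (hamming_vertices k m) hamming_adj \<sigma> \<and> \<sigma> u = v"
proof -
  let ?g = "\<lambda>i. Transposition.transpose (u ! i) (v ! i)"
  have "graph_automorphism (hamming_vertices k m) hamming_adj (hamming_map id ?g)"
    using assms by (intro hamming_map_automorphism) (auto simp: hamming_vertices_iff)
  moreover have "hamming_map id ?g u = v"
    using assms by (auto simp: hamming_vertices_iff intro: nth_equalityI)
  ultimately show ?thesis by blast
qed

lemma inj_on_extends_to_bij_betw:
  assumes "finite S" "A \<subseteq> S" "inj_on f A" "f ` A \<subseteq> S"
  obtains g where "bij_betw g S S" "\<And>x. x \<in> A \<Longrightarrow> g x = f x"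
proof -
  have "card (S - A) = card (S - f ` A)"
    using assms by (simp add: card_Diff_subset card_image finite_subset)
  then obtain h where h: "bij_betw h (S - A) (S - f ` A)"
    using finite_same_card_bij assms(1) by blast
  define g where "g x = (if x \<in> A then f x else h x)" for x
  have "bij_betw g A (f ` A)"
    using assms(3) unfolding g_def by (simp add: bij_betw_def inj_on_def)
  moreover have "bij_betw g (S - A) (S - f ` A)"
    using h unfolding g_def by (rule bij_betw_cong[THEN iffD1, rotated]) auto
  ultimately have "bij_betw g (A \<union> (S - A)) (f ` A \<union> (S - f ` A))"
    by (rule bij_betw_combine) auto
  moreover have "A \<union> (S - A) = S" "f ` A \<union> (S - f ` A) = S" using assms(2,4) by auto
  ultimately show ?thesis using that unfolding g_def by auto
qed

lemma bij_betw_two_points: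
  assumes "finite S" "a1 \<in> S" "a2 \<in> S" "b1 \<in> S" "b2 \<in> S" "a1 \<noteq> a2" "b1 \<noteq> b2"
  obtains G where "bij_betw G S S" "G a1 = b1" "G a2 = b2"
proof -
  let ?f = "\<lambda>v. if v = a1 then b1 else b2"
  have "inj_on ?f {a1, a2}" using assms by (auto simp: inj_on_def)
  then obtain G where "bij_betw G S S" "\<And>x. x \<in> {a1, a2} \<Longrightarrow> G x = ?f x"
    using inj_on_extends_to_bij_betw[of S "{a1, a2}" ?f] assms by auto
  then show ?thesis using that assms(6) by auto
qed

lemma bij_betw_fixing_onto:
  assumes "finite S" "D \<subseteq> S" "A \<subseteq> S - D" "B \<subseteq> S - D" "card A = card B"
  obtains \<pi> where "bij_betw \<pi> S S" "\<And>i. i \<in> D \<Longrightarrow> \<pi> i = i"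
    "\<And>i. i \<in> S \<Longrightarrow> \<pi> i \<in> D \<longleftrightarrow> i \<in> D" "\<And>i. i \<in> S \<Longrightarrow> \<pi> i \<in> B \<longleftrightarrow> i \<in> A"
proof -
  have "finite A" "finite B" using assms(1,3,4) finite_subset by blast+
  then obtain h where h: "bij_betw h A B" using finite_same_card_bij assms(5) by blast
  define f where "f i = (if i \<in> D then i else h i)" for i
  have inj: "inj_on f (D \<union> A)"
    using h assms(3,4) unfolding f_def bij_betw_def inj_on_def by auto
  have into: "f ` (D \<union> A) \<subseteq> S"
    using h assms(2-4) unfolding f_def bij_betw_def by auto
  have "D \<union> A \<subseteq> S" using assms(2,3) by auto
  then obtain \<pi> where \<pi>: "bij_betw \<pi> S S" "\<And>i. i \<in> D \<union> A \<Longrightarrow> \<pi> i = f i"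
    using inj_on_extends_to_bij_betw[OF assms(1) _ inj into] by blast
  have "\<pi> ` A = f ` A" using \<pi>(2) by (intro image_cong) auto
  also have "\<dots> = B" using h assms(3) unfolding f_def bij_betw_def by auto
  finally have "\<pi> ` A = B" .
  have fix_D: "\<pi> i = i" if "i \<in> D" for i using \<pi>(2) that by (simp add: f_def)
  have \<pi>_eq: "i \<in> S \<Longrightarrow> j \<in> S \<Longrightarrow> \<pi> i = \<pi> j \<Longrightarrow> i = j" for i j
    using bij_betw_imp_inj_on[OF \<pi>(1)] by (simp add: inj_on_def)
  show ?thesis
  proof (rule that[OF \<pi>(1) fix_D])
    show "\<pi> i \<in> D \<longleftrightarrow> i \<in> D" if i: "i \<in> S" for i
    proof
      assume "\<pi> i \<in> D"
      then have "\<pi> (\<pi> i) = \<pi> i" by (rule fix_D)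
      then have "\<pi> i = i" using \<pi>_eq[OF _ i] bij_betwE[OF \<pi>(1)] i by blast
      then show "i \<in> D" using \<open>\<pi> i \<in> D\<close> by simp
    qed (simp add: fix_D)
    show "\<pi> i \<in> B \<longleftrightarrow> i \<in> A" if i: "i \<in> S" for i
    proof
      assume "\<pi> i \<in> B"
      then obtain j where "j \<in> A" "\<pi> i = \<pi> j" using \<open>\<pi> ` A = B\<close> by auto
      moreover have "j \<in> S" using \<open>j \<in> A\<close> assms(3) by auto
      ultimately show "i \<in> A" using \<pi>_eq[OF i] by auto
    qed (use \<open>\<pi> ` A = B\<close> in blast)
  qed
qed

lemma symbol_bijections_exist:
  fixes c c' d d' :: "nat \<Rightarrow> nat" and m :: nat
  assumes "\<And>i. i < k \<Longrightarrow> c i < m \<and> c' i < m"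
    and "\<And>i. i \<in> C \<Longrightarrow> i < k \<and> d i < m \<and> d' i < m \<and> d i \<noteq> c i \<and> d' i \<noteq> c' i"
  obtains g where "\<And>i. i < k \<Longrightarrow> bij_betw (g i) {..<m} {..<m}" "\<And>i. g i (c i) = c' i"
    "\<And>i. i \<in> C \<Longrightarrow> g i (d i) = d' i" "\<And>i. i \<notin> C \<Longrightarrow> c i = c' i \<Longrightarrow> g i = id"
proof -
  have "\<exists>G. bij_betw G {..<m} {..<m} \<and> G (c i) = c' i \<and> G (d i) = d' i" if "i \<in> C" for i
  proof -
    have "c i \<in> {..<m}" "d i \<in> {..<m}" "c' i \<in> {..<m}" "d' i \<in> {..<m}"
      "c i \<noteq> d i" "c' i \<noteq> d' i"
      using assms(1)[of i] assms(2)[OF that] by auto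
    then show ?thesis
      by (rule bij_betw_two_points[OF finite_lessThan]) blast
  qed
  then obtain G where G: "\<And>i. i \<in> C \<Longrightarrow>
      bij_betw (G i) {..<m} {..<m} \<and> G i (c i) = c' i \<and> G i (d i) = d' i"
    by metis
  define g where "g i = (if i \<in> C then G i else Transposition.transpose (c i) (c' i))" for i
  show ?thesis
    by (rule that[of g]) (use G assms(1) in \<open>auto simp: g_def fun_eq_iff\<close>)
qed

text \<open>The coordinate permutation fixes \<open>D\<close> and moves the coordinates outside \<open>D\<close> where \<open>b\<close>
  differs from \<open>x0\<close> onto those where \<open>a\<close> does; the symbol permutations fix \<open>x0\<close>.\<close>
lemma hamming_map_data_exists:
  assumes x0: "x0 \<in> hamming_vertices k m" and a: "a \<in> hamming_vertices k m"
    and b: "b \<in> hamming_vertices k m" and D: "D \<subseteq> {..<k}"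
    and card: "card (diff_coords x0 a - D) = card (diff_coords x0 b - D)"
  obtains \<pi> g where "bij_betw \<pi> {..<k} {..<k}" "\<And>i. i < k \<Longrightarrow> bij_betw (g i) {..<m} {..<m}"
    "\<And>i. i \<in> D \<Longrightarrow> \<pi> i = i \<and> g i = id"
    "\<And>i. i < k \<Longrightarrow> i \<notin> D \<Longrightarrow> \<pi> i \<notin> D \<and> g i (x0 ! \<pi> i) = x0 ! i \<and> g i (a ! \<pi> i) = b ! i"
proof -
  define Ca Cb where "Ca = diff_coords x0 a - D" and "Cb = diff_coords x0 b - D"
  have len: "length x0 = k" "length a = k" "length b = k"
    using x0 a b by (simp_all add: hamming_vertices_iff)
  have vals: "\<And>i. i < k \<Longrightarrow> x0 ! i < m \<and> a ! i < m \<and> b ! i < m"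
    using x0 a b by (simp add: hamming_vertices_iff)
  have "Cb \<subseteq> {..<k} - D" "Ca \<subseteq> {..<k} - D"
    using diff_coords_subset len unfolding Ca_def Cb_def by fastforce+
  then obtain \<pi> where \<pi>: "bij_betw \<pi> {..<k} {..<k}" "\<And>i. i \<in> D \<Longrightarrow> \<pi> i = i"
    "\<And>i. i < k \<Longrightarrow> \<pi> i \<in> D \<longleftrightarrow> i \<in> D" "\<And>i. i < k \<Longrightarrow> \<pi> i \<in> Ca \<longleftrightarrow> i \<in> Cb"
    using bij_betw_fixing_onto[OF finite_lessThan D _ _ card[symmetric]] unfolding Ca_def Cb_def
    by (metis lessThan_iff)
  have \<pi>k: "i < k \<Longrightarrow> \<pi> i < k" for i using \<pi>(1) by (meson bij_betwE lessThan_iff)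
  have outside: "a ! \<pi> i = x0 ! \<pi> i \<longleftrightarrow> i \<notin> Cb" "b ! i = x0 ! i \<longleftrightarrow> i \<notin> Cb"
    if "i < k" "i \<notin> D" for i
    using \<pi>(3,4)[OF that(1)] that len \<pi>k[OF that(1)] by (auto simp: Ca_def Cb_def diff_coords_def)
  obtain g where g: "\<And>i. i < k \<Longrightarrow> bij_betw (g i) {..<m} {..<m}" "\<And>i. g i (x0 ! \<pi> i) = x0 ! i"
    "\<And>i. i \<in> Cb \<Longrightarrow> g i (a ! \<pi> i) = b ! i" "\<And>i. i \<notin> Cb \<Longrightarrow> x0 ! \<pi> i = x0 ! i \<Longrightarrow> g i = id"
  proof (rule symbol_bijections_exist)
    show "x0 ! \<pi> i < m \<and> x0 ! i < m" if "i < k" for i using vals \<pi>k that by blast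
    show "i < k \<and> a ! \<pi> i < m \<and> b ! i < m \<and> a ! \<pi> i \<noteq> x0 ! \<pi> i \<and> b ! i \<noteq> x0 ! i"
      if "i \<in> Cb" for i
      using that outside[of i] vals \<pi>k \<open>Cb \<subseteq> {..<k} - D\<close> by auto
  qed blast
  show ?thesis
  proof (rule that[OF \<pi>(1) g(1)])
    show "\<pi> i = i \<and> g i = id" if "i \<in> D" for i
      using g(4) \<pi>(2)[OF that] that by (simp add: Cb_def)
    show "\<pi> i \<notin> D \<and> g i (x0 ! \<pi> i) = x0 ! i \<and> g i (a ! \<pi> i) = b ! i"
      if "i < k" "i \<notin> D" for i
      using that \<pi>(3) g(2,3) outside[OF that] by (cases "i \<in> Cb") auto
  qed
qed

lemma hamming_automorphism_extension:
  assumes x0: "x0 \<in> hamming_vertices k m" and a: "a \<in> hamming_vertices k m"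
    and b: "b \<in> hamming_vertices k m" and D: "D \<subseteq> {..<k}"
    and agree: "\<And>i. i \<in> D \<Longrightarrow> a ! i = b ! i"
    and card: "card (diff_coords x0 a - D) = card (diff_coords x0 b - D)"
  obtains \<tau> where "graph_automorphism (hamming_vertices k m) hamming_adj \<tau>" "\<tau> a = b"
    "\<And>z. z \<in> hamming_vertices k m \<Longrightarrow> (\<And>i. i < k \<Longrightarrow> i \<notin> D \<Longrightarrow> z ! i = x0 ! i) \<Longrightarrow> \<tau> z = z"
proof -
  obtain \<pi> g where \<pi>: "bij_betw \<pi> {..<k} {..<k}" and g: "\<And>i. i < k \<Longrightarrow> bij_betw (g i) {..<m} {..<m}"
    and on_D: "\<And>i. i \<in> D \<Longrightarrow> \<pi> i = i \<and> g i = id"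
    and off_D: "\<And>i. i < k \<Longrightarrow> i \<notin> D \<Longrightarrow> \<pi> i \<notin> D \<and> g i (x0 ! \<pi> i) = x0 ! i \<and> g i (a ! \<pi> i) = b ! i"
    using hamming_map_data_exists[OF x0 a b D card] by blast
  have \<pi>k: "i < k \<Longrightarrow> \<pi> i < k" for i using \<pi> by (meson bij_betwE lessThan_iff)
  show ?thesis
  proof
    show "graph_automorphism (hamming_vertices k m) hamming_adj (hamming_map \<pi> g)"
      using \<pi> g by (rule hamming_map_automorphism)
    have "hamming_map \<pi> g a ! i = b ! i" if "i < k" for i
      using that a on_D off_D[OF that] agree by (cases "i \<in> D") (auto simp: hamming_vertices_iff)
    then show "hamming_map \<pi> g a = b"
      using a b by (intro nth_equalityI) (auto simp: hamming_vertices_iff)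
  next
    fix z assume z: "z \<in> hamming_vertices k m" "\<And>i. i < k \<Longrightarrow> i \<notin> D \<Longrightarrow> z ! i = x0 ! i"
    have "hamming_map \<pi> g z ! i = z ! i" if "i < k" for i
      using that z z(2)[OF \<pi>k[OF that]] on_D off_D[OF that]
      by (cases "i \<in> D") (auto simp: hamming_vertices_iff)
    then show "hamming_map \<pi> g z = z"
      using z(1) by (intro nth_equalityI) (auto simp: hamming_vertices_iff)
  qed
qed

section \<open>Graphs carrying a scaled Hamming metric\<close>

definition hamming_stabilizer :: "nat \<Rightarrow> nat \<Rightarrow> nat list set \<Rightarrow> (nat list \<Rightarrow> nat list) set" where
  "hamming_stabilizer k m V =
     {\<sigma>. graph_automorphism (hamming_vertices k m) hamming_adj \<sigma> \<and> \<sigma> ` V = V}"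

locale scaled_hamming_embedding =
  fixes k m s :: nat and V :: "nat list set" and E :: "nat list \<Rightarrow> nat list \<Rightarrow> bool"
  assumes V_subset: "V \<subseteq> hamming_vertices k m"
    and scale_pos: "0 < s"
    and adj_iff: "u \<in> V \<Longrightarrow> v \<in> V \<Longrightarrow> E u v \<longleftrightarrow> hamming_dist u v = s"
    and hamming_dist_eq: "u \<in> V \<Longrightarrow> v \<in> V \<Longrightarrow> hamming_dist u v = s * gdist V E u v"
    and stable: "graph_automorphism (hamming_vertices k m) hamming_adj \<sigma> \<Longrightarrow> x \<in> V \<Longrightarrow> \<sigma> x \<in> V
      \<Longrightarrow> \<sigma> ` V = V"
begin

lemma length_of_vertex: "x \<in> V \<Longrightarrow> length x = k"
  using V_subset by (auto simp: hamming_vertices_iff)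

lemma stabilizer_automorphism:
  assumes "\<sigma> \<in> hamming_stabilizer k m V"
  shows "graph_automorphism V E \<sigma>"
proof -
  have a: "graph_automorphism (hamming_vertices k m) hamming_adj \<sigma>" and "\<sigma> ` V = V"
    using assms unfolding hamming_stabilizer_def by blast+
  have "bij_betw \<sigma> (hamming_vertices k m) (hamming_vertices k m)"
    using a by (simp add: graph_automorphism_def)
  then have "inj_on \<sigma> V" using V_subset by (rule inj_on_subset[OF bij_betw_imp_inj_on])
  moreover have "E u v \<longleftrightarrow> E (\<sigma> u) (\<sigma> v)" if "u \<in> V" "v \<in> V" for u v
  proof -
    have "\<sigma> u \<in> V" "\<sigma> v \<in> V" using that \<open>\<sigma> ` V = V\<close> by auto
    moreover have "hamming_dist (\<sigma> u) (\<sigma> v) = hamming_dist u v"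
      using hamming_dist_automorphism[OF a] that V_subset by blast
    ultimately show ?thesis using adj_iff that by simp
  qed
  ultimately show ?thesis
    using \<open>\<sigma> ` V = V\<close> by (simp add: graph_automorphism_def bij_betw_def)
qed

lemma stabilizer_comp:
  assumes "\<sigma> \<in> hamming_stabilizer k m V" "\<tau> \<in> hamming_stabilizer k m V"
  shows "\<tau> \<circ> \<sigma> \<in> hamming_stabilizer k m V"
proof -
  have "(\<tau> \<circ> \<sigma>) ` V = \<tau> ` \<sigma> ` V" by (rule image_comp[symmetric])
  with assms show ?thesis
    unfolding hamming_stabilizer_def by (simp add: graph_automorphism_comp)
qed

lemma gdist_triangle:
  assumes "u \<in> V" "v \<in> V" "w \<in> V"
  shows "gdist V E u w \<le> gdist V E u v + gdist V E v w"
proof -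
  have "s * gdist V E u w \<le> s * gdist V E u v + s * gdist V E v w"
    using hamming_dist_triangle[of u v w] hamming_dist_eq assms length_of_vertex by simp
  then show ?thesis using scale_pos by (simp flip: distrib_left)
qed

lemma geodesic_hamming_dist_split:
  assumes "geodesic V E p" "z \<in> set p"
  shows "hamming_dist (hd p) z + hamming_dist z (last p) = hamming_dist (hd p) (last p)"
proof -
  have "hd p \<in> V" "last p \<in> V" "z \<in> V"
    using assms walk_subset walk_not_Nil unfolding geodesic_def by fastforce+
  moreover have "s * gdist V E (hd p) z + s * gdist V E z (last p) = s * gdist V E (hd p) (last p)"
    using geodesic_gdist_split[OF gdist_triangle assms] by (simp flip: distrib_left)
  ultimately show ?thesis using hamming_dist_eq by simp
qed

lemma geodesic_coords:
  assumes "geodesic V E p" "z \<in> set p" "i < k"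
  shows "z ! i = hd p ! i \<or> z ! i = last p ! i"
proof -
  have "hd p \<in> V" "last p \<in> V" "z \<in> V"
    using assms walk_subset walk_not_Nil unfolding geodesic_def by fastforce+
  then show ?thesis
    using hamming_dist_between[of "hd p" "last p" z i] geodesic_hamming_dist_split[OF assms(1,2)]
      assms(3) length_of_vertex by simp
qed

lemma geodesic_last_step:
  assumes g: "geodesic V E (p @ [a])" and "p \<noteq> []"
  shows "hamming_dist (last p) a = s"
proof -
  have "gdist V E (hd p) (last p) + gdist V E (last p) a = gdist V E (hd p) a"
    using geodesic_gdist_split[OF gdist_triangle g, of "last p"] \<open>p \<noteq> []\<close> by simp
  moreover have "gdist V E (hd p) a = length p"
    using g \<open>p \<noteq> []\<close> by (simp add: geodesic_def)
  moreover have "gdist V E (hd p) (last p) = length p - 1"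
    using geodesic_butlast[OF g \<open>p \<noteq> []\<close>] by (simp add: geodesic_def)
  moreover have "last p \<in> V" "a \<in> V"
    using g \<open>p \<noteq> []\<close> by (auto simp: geodesic_def walk_snoc walk_def)
  moreover have "length p > 0" using \<open>p \<noteq> []\<close> by simp
  ultimately have "gdist V E (last p) a = 1" by arith
  then show ?thesis using hamming_dist_eq \<open>last p \<in> V\<close> \<open>a \<in> V\<close> by simp
qed

lemma geodesic_step_diff_coords:
  assumes gc: "geodesic V E (p @ [c])" and "p \<noteq> []"
  defines "D \<equiv> diff_coords (hd p) (last p)"
  shows "\<And>i. i \<in> D \<Longrightarrow> c ! i = last p ! i" and "card (diff_coords (hd p) c - D) = s"
proof -
  have V: "hd p \<in> V" "last p \<in> V" "c \<in> V"
    using gc \<open>p \<noteq> []\<close> by (auto simp: geodesic_def walk_snoc walk_def)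
  have outside_D: "i \<notin> D \<longleftrightarrow> hd p ! i = last p ! i" if "i < k" for i
    using that length_of_vertex V by (auto simp: D_def diff_coords_def)
  show onD: "c ! i = last p ! i" if "i \<in> D" for i
  proof -
    have "i < k" using that length_of_vertex[OF V(1)] diff_coords_subset D_def by auto
    then show ?thesis
      using geodesic_coords[OF gc, of "last p" i] that outside_D[of i] \<open>p \<noteq> []\<close> by auto
  qed
  have "i \<in> diff_coords (hd p) c - D \<longleftrightarrow> i \<in> diff_coords (last p) c" for i
    using onD[of i] outside_D[of i] length_of_vertex V by (cases "i < k") (auto simp: diff_coords_def)
  then have "diff_coords (hd p) c - D = diff_coords (last p) c" by blast
  then show "card (diff_coords (hd p) c - D) = s"
    using geodesic_last_step[OF gc \<open>p \<noteq> []\<close>] by (simp add: hamming_dist_def)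
qed

lemma geodesic_extension:
  assumes "p \<noteq> []" "geodesic V E (p @ [a])" "geodesic V E (p @ [b])"
  shows "\<exists>\<tau>\<in>hamming_stabilizer k m V. (\<forall>z\<in>set p. \<tau> z = z) \<and> \<tau> a = b"
proof -
  define x0 D where "x0 = hd p" and "D = diff_coords (hd p) (last p)"
  have gp: "geodesic V E p" using geodesic_butlast[OF assms(2,1)] .
  have pV: "set p \<subseteq> V" using gp walk_subset unfolding geodesic_def by blast
  then have "x0 \<in> V" using assms(1) by (auto simp: x0_def)
  have "a \<in> V" "b \<in> V" using assms(2,3) by (simp_all add: geodesic_def walk_snoc)
  have "D \<subseteq> {..<k}"
    using diff_coords_subset[of "hd p" "last p"] length_of_vertex[OF \<open>x0 \<in> V\<close>]
    unfolding D_def x0_def by simp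
  then obtain \<tau> where \<tau>: "graph_automorphism (hamming_vertices k m) hamming_adj \<tau>" "\<tau> a = b"
    "\<And>z. z \<in> hamming_vertices k m \<Longrightarrow> (\<And>i. i < k \<Longrightarrow> i \<notin> D \<Longrightarrow> z ! i = x0 ! i) \<Longrightarrow> \<tau> z = z"
  proof -
    have "x0 \<in> hamming_vertices k m" "a \<in> hamming_vertices k m" "b \<in> hamming_vertices k m"
      using \<open>x0 \<in> V\<close> \<open>a \<in> V\<close> \<open>b \<in> V\<close> V_subset by auto
    moreover have "\<And>i. i \<in> D \<Longrightarrow> a ! i = b ! i"
      using geodesic_step_diff_coords(1)[OF assms(2,1)] geodesic_step_diff_coords(1)[OF assms(3,1)]
      unfolding D_def by simp
    moreover have "card (diff_coords x0 a - D) = card (diff_coords x0 b - D)"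
      using geodesic_step_diff_coords(2)[OF assms(2,1)] geodesic_step_diff_coords(2)[OF assms(3,1)]
      unfolding x0_def D_def by simp
    ultimately show ?thesis
      using that hamming_automorphism_extension[OF _ _ _ \<open>D \<subseteq> {..<k}\<close>] by blast
  qed
  have fix_p: "\<tau> z = z" if "z \<in> set p" for z
  proof (rule \<tau>(3))
    show "z \<in> hamming_vertices k m" using that pV V_subset by auto
    fix i assume "i < k" "i \<notin> D"
    then show "z ! i = x0 ! i"
      using geodesic_coords[OF gp that \<open>i < k\<close>] length_of_vertex[OF \<open>x0 \<in> V\<close>]
      by (auto simp: x0_def D_def diff_coords_def)
  qed
  then have "\<tau> x0 = x0" using assms(1) by (simp add: x0_def)
  then have "\<tau> \<in> hamming_stabilizer k m V"
    using stable[OF \<tau>(1) \<open>x0 \<in> V\<close>] \<open>x0 \<in> V\<close> \<tau>(1) by (simp add: hamming_stabilizer_def)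
  then show ?thesis using fix_p \<tau>(2) by blast
qed

theorem geodesic_transitive_by_stabilizer:
  "geodesic_transitive_by (hamming_stabilizer k m V) V E"
proof (rule geodesic_transitive_byI)
  show "graph_automorphism V E \<sigma>" if "\<sigma> \<in> hamming_stabilizer k m V" for \<sigma>
    using that by (rule stabilizer_automorphism)
  show "\<tau> \<circ> \<sigma> \<in> hamming_stabilizer k m V"
    if "\<sigma> \<in> hamming_stabilizer k m V" "\<tau> \<in> hamming_stabilizer k m V" for \<sigma> \<tau>
    using that by (rule stabilizer_comp)
  show "\<exists>\<tau>\<in>hamming_stabilizer k m V. (\<forall>z\<in>set p. \<tau> z = z) \<and> \<tau> a = b"
    if "p \<noteq> []" "geodesic V E (p @ [a])" "geodesic V E (p @ [b])" for p a b
    using that by (rule geodesic_extension)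
  show "\<exists>\<sigma>\<in>hamming_stabilizer k m V. \<sigma> u = v" if uv: "u \<in> V" "v \<in> V" for u v
  proof -
    obtain \<sigma> where "graph_automorphism (hamming_vertices k m) hamming_adj \<sigma>" "\<sigma> u = v"
      using hamming_vertex_transitive V_subset uv by blast
    moreover have "\<sigma> ` V = V" using stable calculation uv by blast
    ultimately show ?thesis by (auto simp: hamming_stabilizer_def)
  qed
qed

theorem geodesic_transitive: "geodesic_transitive V E"
proof -
  have "graph_automorphism V E \<sigma>" if "\<sigma> \<in> hamming_stabilizer k m V" for \<sigma>
    using that by (rule stabilizer_automorphism)
  with geodesic_transitive_by_stabilizer show ?thesis by (rule geodesic_transitiveI)
qed

end

section \<open>The Hamming graph and the halved cube\<close>

lemma scaled_hamming_embedding_hamming: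
  "scaled_hamming_embedding k m 1 (hamming_vertices k m) hamming_adj"
proof
  fix \<sigma> assume "graph_automorphism (hamming_vertices k m) hamming_adj \<sigma>"
  then show "\<sigma> ` hamming_vertices k m = hamming_vertices k m"
    by (simp add: graph_automorphism_def bij_betw_def)
qed (simp_all add: gdist_hamming hamming_adj_iff hamming_vertices_iff)

theorem geodesic_transitive_hamming: "geodesic_transitive (hamming_vertices k m) hamming_adj"
  by (rule scaled_hamming_embedding.geodesic_transitive[OF scaled_hamming_embedding_hamming])

lemma cube_coord: "x \<in> hamming_vertices k 2 \<Longrightarrow> i < k \<Longrightarrow> x ! i = 0 \<or> x ! i = 1"
  by (auto simp: hamming_vertices_iff less_2_cases_iff)

lemma hamming_dist_plus_common_ones:
  assumes x: "x \<in> hamming_vertices k 2" and y: "y \<in> hamming_vertices k 2"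
  shows "hamming_dist x y + 2 * card ({i. i < k \<and> x ! i = 1} \<inter> {i. i < k \<and> y ! i = 1}) =
    weight x + weight y"
proof -
  let ?X = "{i. i < k \<and> x ! i = 1}" and ?Y = "{i. i < k \<and> y ! i = 1}"
  have len: "length x = k" "length y = k" using x y by (auto simp: hamming_vertices_iff)
  have fin: "finite ?X" "finite ?Y" by simp_all
  have "i \<in> diff_coords x y \<longleftrightarrow> i \<in> (?X \<union> ?Y) - (?X \<inter> ?Y)" for i
    using cube_coord[OF x, of i] cube_coord[OF y, of i] len
    by (cases "i < k") (auto simp: diff_coords_def)
  then have "diff_coords x y = (?X \<union> ?Y) - (?X \<inter> ?Y)" by blast
  moreover have "?X \<inter> ?Y \<subseteq> ?X \<union> ?Y" "finite (?X \<inter> ?Y)" using fin by auto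
  ultimately have "hamming_dist x y = card (?X \<union> ?Y) - card (?X \<inter> ?Y)"
    unfolding hamming_dist_def by (simp only: card_Diff_subset)
  moreover have "card ?X + card ?Y = card (?X \<union> ?Y) + card (?X \<inter> ?Y)"
    by (rule card_Un_Int[OF fin])
  moreover have "card (?X \<inter> ?Y) \<le> card (?X \<union> ?Y)" using fin by (intro card_mono) auto
  ultimately show ?thesis using len by (simp add: weight_def)
qed

lemma even_hamming_dist_iff:
  assumes "x \<in> hamming_vertices k 2" "y \<in> hamming_vertices k 2"
  shows "even (hamming_dist x y) \<longleftrightarrow> (even (weight x) \<longleftrightarrow> even (weight y))"
proof -
  obtain c where "hamming_dist x y + 2 * c = weight x + weight y"
    using hamming_dist_plus_common_ones[OF assms] by blast
  then show ?thesis by presburger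
qed

lemma halved_cube_in_cube: "x \<in> halved_cube_vertices k \<Longrightarrow> x \<in> hamming_vertices k 2"
  by (simp add: halved_cube_vertices_def)

lemma even_hamming_dist_halved_cube:
  "x \<in> halved_cube_vertices k \<Longrightarrow> y \<in> halved_cube_vertices k \<Longrightarrow> even (hamming_dist x y)"
  using even_hamming_dist_iff by (auto simp: halved_cube_vertices_def)

lemma halved_cube_adj_iff:
  "x \<in> hamming_vertices k 2 \<Longrightarrow> y \<in> hamming_vertices k 2 \<Longrightarrow>
     halved_cube_adj k x y \<longleftrightarrow> hamming_dist x y = 2"
  by (simp add: halved_cube_adj_def gdist_hamming)

lemma halved_cube_descent:
  assumes uv: "u \<in> halved_cube_vertices k" "v \<in> halved_cube_vertices k" "u \<noteq> v"
  shows "\<exists>w\<in>halved_cube_vertices k. halved_cube_adj k u w \<and>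
    Suc (hamming_dist w v div 2) = hamming_dist u v div 2"
proof -
  have cube: "u \<in> hamming_vertices k 2" "v \<in> hamming_vertices k 2"
    using uv halved_cube_in_cube by auto
  then have "hamming_dist u v \<noteq> 0"
    using uv(3) hamming_dist_eq_0_iff by (auto simp: hamming_vertices_iff)
  then have "2 \<le> hamming_dist u v"
    using even_hamming_dist_halved_cube[OF uv(1,2)] by presburger
  then have "2 \<le> card (diff_coords u v)" by (simp add: hamming_dist_def)
  then obtain S where "S \<subseteq> diff_coords u v" "card S = 2"
    by (rule obtain_subset_with_card_n)
  then obtain w where w: "w \<in> hamming_vertices k 2" "diff_coords u w = S"
    "hamming_dist w v = hamming_dist u v - 2"
    using copy_coords_exists[OF cube] by metis
  have "hamming_dist u w = 2" using w(2) \<open>card S = 2\<close> by (simp add: hamming_dist_def)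
  then have "w \<in> halved_cube_vertices k" "halved_cube_adj k u w"
    using even_hamming_dist_iff[OF cube(1) w(1)] uv(1) w(1) halved_cube_adj_iff[OF cube(1) w(1)]
    by (auto simp: halved_cube_vertices_def)
  moreover have "Suc (hamming_dist w v div 2) = hamming_dist u v div 2"
    using w(3) \<open>2 \<le> hamming_dist u v\<close> even_hamming_dist_halved_cube[OF uv(1,2)]
    by (auto elim!: evenE)
  ultimately show ?thesis by blast
qed

lemma gdist_halved_cube:
  assumes "x \<in> halved_cube_vertices k" "y \<in> halved_cube_vertices k"
  shows "hamming_dist x y = 2 * gdist (halved_cube_vertices k) (halved_cube_adj k) x y"
proof -
  let ?V = "halved_cube_vertices k"
  have "gdist ?V (halved_cube_adj k) x y = hamming_dist x y div 2"
  proof (rule gdist_eqI[OF _ _ _ halved_cube_descent assms])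
    fix u v w assume "u \<in> ?V" "v \<in> ?V" "w \<in> ?V"
    moreover have "hamming_dist u w \<le> hamming_dist u v + hamming_dist v w"
      using calculation
      by (intro hamming_dist_triangle) (auto simp: halved_cube_vertices_def hamming_vertices_iff)
    moreover have "even (hamming_dist u v)" "even (hamming_dist v w)"
      using calculation(1-3) even_hamming_dist_halved_cube by blast+
    ultimately show "hamming_dist u w div 2 \<le> hamming_dist u v div 2 + hamming_dist v w div 2"
      by (auto elim!: evenE)
  next
    fix u v assume "u \<in> ?V" "v \<in> ?V" "halved_cube_adj k u v"
    then show "hamming_dist u v div 2 \<le> 1"
      using halved_cube_adj_iff[OF halved_cube_in_cube halved_cube_in_cube] by simp
  qed simp
  then show ?thesis using even_hamming_dist_halved_cube[OF assms] by simp
qed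

text \<open>Automorphisms of the cube preserve the parity of Hamming distances, so one that maps some
  even vertex to an even vertex preserves the even class.\<close>
lemma cube_automorphism_halved_cube:
  assumes a: "graph_automorphism (hamming_vertices k 2) hamming_adj \<sigma>"
    and x: "x \<in> halved_cube_vertices k" "\<sigma> x \<in> halved_cube_vertices k"
  shows "\<sigma> ` halved_cube_vertices k = halved_cube_vertices k"
proof -
  let ?C = "hamming_vertices k 2"
  have xC: "x \<in> ?C" "\<sigma> x \<in> ?C" using x halved_cube_in_cube by auto
  have parity: "even (weight (\<sigma> z)) \<longleftrightarrow> even (weight z)" if "z \<in> ?C" for z
    using even_hamming_dist_iff[OF graph_automorphism_in[OF a that] xC(2)]
      even_hamming_dist_iff[OF that xC(1)] hamming_dist_automorphism[OF a that xC(1)] x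
    by (simp add: halved_cube_vertices_def)
  show ?thesis
  proof
    show "\<sigma> ` halved_cube_vertices k \<subseteq> halved_cube_vertices k"
      using parity graph_automorphism_in[OF a] by (auto simp: halved_cube_vertices_def)
  next
    show "halved_cube_vertices k \<subseteq> \<sigma> ` halved_cube_vertices k"
    proof
      fix y assume y: "y \<in> halved_cube_vertices k"
      have "\<sigma> ` ?C = ?C" using a by (simp add: graph_automorphism_def bij_betw_def)
      then obtain z where "z \<in> ?C" "y = \<sigma> z" using halved_cube_in_cube[OF y] by blast
      then show "y \<in> \<sigma> ` halved_cube_vertices k"
        using parity y by (auto simp: halved_cube_vertices_def)
    qed
  qed
qed

lemma scaled_hamming_embedding_halved_cube:
  "scaled_hamming_embedding k 2 2 (halved_cube_vertices k) (halved_cube_adj k)"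
  using halved_cube_in_cube halved_cube_adj_iff gdist_halved_cube cube_automorphism_halved_cube
  by unfold_locales auto

theorem geodesic_transitive_halved_cube:
  "geodesic_transitive (halved_cube_vertices k) (halved_cube_adj k)"
  by (rule scaled_hamming_embedding.geodesic_transitive[OF scaled_hamming_embedding_halved_cube])

section \<open>The folded cube\<close>

lemma length_complement [simp]: "length (complement x) = length x"
  by (simp add: complement_def)

lemma nth_complement [simp]: "i < length x \<Longrightarrow> complement x ! i = 1 - x ! i"
  by (simp add: complement_def)

lemma complement_automorphism:
  "graph_automorphism (hamming_vertices k 2) hamming_adj complement"
proof -
  have "complement = hamming_map id (\<lambda>_ a. 1 - a)"
    by (auto simp: fun_eq_iff complement_def intro: nth_equalityI)
  moreover have "bij_betw (\<lambda>a::nat. 1 - a) {..<2} {..<2}"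
    by (rule bij_betw_byWitness[where f' = "\<lambda>a. 1 - a"]) auto
  ultimately show ?thesis using hamming_map_automorphism[of id k "\<lambda>_ a. 1 - a" 2] by simp
qed

lemma complement_in_cube: "x \<in> hamming_vertices k 2 \<Longrightarrow> complement x \<in> hamming_vertices k 2"
  by (rule graph_automorphism_in[OF complement_automorphism])

lemma complement_complement:
  "x \<in> hamming_vertices k 2 \<Longrightarrow> complement (complement x) = x"
  by (rule nth_equalityI) (auto dest: cube_coord simp: hamming_vertices_iff)

lemma hamming_dist_complement:
  assumes "x \<in> hamming_vertices k 2"
  shows "hamming_dist x (complement x) = k"
proof -
  have "a \<noteq> 1 - a" for a :: nat by arith
  then have "diff_coords x (complement x) = {..<k}"
    using assms by (auto simp: diff_coords_def hamming_vertices_iff)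
  then show ?thesis by (simp add: hamming_dist_def)
qed

text \<open>The complement is the unique vertex at distance \<open>k\<close>, so every automorphism of the cube
  commutes with it.\<close>
lemma complement_eqI:
  assumes x: "x \<in> hamming_vertices k 2" and y: "y \<in> hamming_vertices k 2"
    and "hamming_dist x y = k"
  shows "y = complement x"
proof -
  have len: "length x = k" "length y = k" using x y by (auto simp: hamming_vertices_iff)
  have "diff_coords x y = {..<k}"
    using diff_coords_subset[of x y] assms(3) len
    by (intro card_subset_eq) (auto simp: hamming_dist_def)
  show ?thesis
  proof (rule nth_equalityI)
    fix i assume "i < length y"
    then have "i < k" "i \<in> diff_coords x y" using len \<open>diff_coords x y = {..<k}\<close> by auto
    then show "y ! i = complement x ! i"
      using cube_coord[OF x \<open>i < k\<close>] cube_coord[OF y \<open>i < k\<close>] len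
      by (auto simp: diff_coords_def)
  qed (simp add: len)
qed

lemma automorphism_complement:
  assumes a: "graph_automorphism (hamming_vertices k 2) hamming_adj \<sigma>" and x: "x \<in> hamming_vertices k 2"
  shows "\<sigma> (complement x) = complement (\<sigma> x)"
proof (rule complement_eqI)
  show "\<sigma> x \<in> hamming_vertices k 2" "\<sigma> (complement x) \<in> hamming_vertices k 2"
    using graph_automorphism_in[OF a] x complement_in_cube by auto
  show "hamming_dist (\<sigma> x) (\<sigma> (complement x)) = k"
    using hamming_dist_automorphism[OF a x complement_in_cube[OF x]] hamming_dist_complement[OF x]
    by simp
qed

lemma fold_class_self: "x \<in> fold_class x"
  by (simp add: fold_class_def)

lemma fold_class_eq:
  "x \<in> hamming_vertices k 2 \<Longrightarrow> y \<in> fold_class x \<Longrightarrow>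
     y \<in> hamming_vertices k 2 \<and> fold_class y = fold_class x"
  using complement_in_cube complement_complement by (auto simp: fold_class_def)

lemma image_fold_class:
  "graph_automorphism (hamming_vertices k 2) hamming_adj \<sigma> \<Longrightarrow> x \<in> hamming_vertices k 2 \<Longrightarrow>
     \<sigma> ` fold_class x = fold_class (\<sigma> x)"
  using automorphism_complement by (simp add: fold_class_def)

lemma graph_quotient_folded_cube:
  "graph_quotient (hamming_vertices k 2) hamming_adj (folded_cube_vertices k) folded_cube_adj fold_class"
proof
  show "x \<in> fold_class x" for x by (rule fold_class_self)
  show "y \<in> hamming_vertices k 2 \<and> fold_class y = fold_class x"
    if "x \<in> hamming_vertices k 2" "y \<in> fold_class x" for x y
    using that by (rule fold_class_eq)
  show "folded_cube_vertices k = fold_class ` hamming_vertices k 2"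
    by (simp add: folded_cube_vertices_def)
  show "folded_cube_adj (fold_class u) (fold_class v) \<or> fold_class u = fold_class v"
    if "hamming_adj u v" for u v
    using that fold_class_self unfolding folded_cube_adj_def by blast
next
  fix x B assume x: "x \<in> hamming_vertices k 2" and B: "B \<in> folded_cube_vertices k"
    and "folded_cube_adj (fold_class x) B"
  then obtain x' y where xy: "x' \<in> fold_class x" "y \<in> B" "hamming_adj x' y"
    unfolding folded_cube_adj_def by blast
  obtain y0 where y0: "y0 \<in> hamming_vertices k 2" "B = fold_class y0"
    using B unfolding folded_cube_vertices_def by blast
  then have y: "y \<in> hamming_vertices k 2" "fold_class y = B"
    using fold_class_eq[OF y0(1), of y] xy(2) by auto
  then have "complement y \<in> B" by (auto simp: fold_class_def)
  show "\<exists>y\<in>B. hamming_adj x y"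
  proof (cases "x' = x")
    case False
    then have "x' = complement x" using xy(1) by (simp add: fold_class_def)
    moreover have "\<forall>u\<in>hamming_vertices k 2. \<forall>v\<in>hamming_vertices k 2.
        hamming_adj u v \<longleftrightarrow> hamming_adj (complement u) (complement v)"
      using complement_automorphism by (simp add: graph_automorphism_def)
    ultimately have "hamming_adj (complement (complement x)) (complement y)"
      using xy(3) complement_in_cube[OF x] y(1) by blast
    then have "hamming_adj x (complement y)" using complement_complement[OF x] by simp
    then show ?thesis using \<open>complement y \<in> B\<close> by blast
  qed (use xy in blast)
qed

lemma folded_cube_induced_automorphism:
  assumes a: "graph_automorphism (hamming_vertices k 2) hamming_adj \<sigma>"
  shows "graph_automorphism (folded_cube_vertices k) folded_cube_adj (image \<sigma>)"
proof -
  let ?C = "hamming_vertices k 2" and ?F = "folded_cube_vertices k"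
  have into: "image \<tau> ` ?F \<subseteq> ?F" if "graph_automorphism ?C hamming_adj \<tau>" for \<tau>
    using image_fold_class[OF that] graph_automorphism_in[OF that]
    by (auto simp: folded_cube_vertices_def)
  have sub: "A \<subseteq> ?C" if A: "A \<in> ?F" for A
  proof
    fix z assume "z \<in> A"
    obtain x where "x \<in> ?C" "A = fold_class x" using A by (auto simp: folded_cube_vertices_def)
    then show "z \<in> ?C" using fold_class_eq \<open>z \<in> A\<close> by blast
  qed
  have b: "bij_betw \<sigma> ?C ?C" using a by (simp add: graph_automorphism_def)
  have bF: "bij_betw (image \<sigma>) ?F ?F"
  proof (rule bij_betw_byWitness[where f' = "image (inv_into ?C \<sigma>)"])
    show "\<forall>A\<in>?F. inv_into ?C \<sigma> ` \<sigma> ` A = A"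
      using inv_into_image_cancel[OF bij_betw_imp_inj_on[OF b]] sub by blast
    show "\<forall>A\<in>?F. \<sigma> ` inv_into ?C \<sigma> ` A = A"
      using image_inv_into_cancel[OF bij_betw_imp_surj_on[OF b]] sub by blast
  qed (use into a graph_automorphism_inv_into[OF a] in auto)
  have adj: "(\<exists>x\<in>A. \<exists>y\<in>B. hamming_adj x y) \<longleftrightarrow> (\<exists>x\<in>\<sigma> ` A. \<exists>y\<in>\<sigma> ` B. hamming_adj x y)"
    if "A \<in> ?F" "B \<in> ?F" for A B
  proof -
    have "\<forall>u\<in>?C. \<forall>v\<in>?C. hamming_adj u v \<longleftrightarrow> hamming_adj (\<sigma> u) (\<sigma> v)"
      using a by (simp add: graph_automorphism_def)
    then show ?thesis using sub[OF that(1)] sub[OF that(2)] by blast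
  qed
  have "A \<noteq> B \<longleftrightarrow> \<sigma> ` A \<noteq> \<sigma> ` B" if "A \<in> ?F" "B \<in> ?F" for A B
    using bij_betw_imp_inj_on[OF bF] that by (auto simp: inj_on_def)
  then show ?thesis
    using bF adj by (simp add: graph_automorphism_def folded_cube_adj_def)
qed

theorem geodesic_transitive_folded_cube:
  "geodesic_transitive (folded_cube_vertices k) folded_cube_adj"
proof (rule graph_quotient.geodesic_transitive_quotient[OF graph_quotient_folded_cube])
  show "geodesic_transitive_by (hamming_stabilizer k 2 (hamming_vertices k 2))
      (hamming_vertices k 2) hamming_adj"
    by (rule scaled_hamming_embedding.geodesic_transitive_by_stabilizer[OF
          scaled_hamming_embedding_hamming])
  show "graph_automorphism (folded_cube_vertices k) folded_cube_adj (image \<sigma>)"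
    if "\<sigma> \<in> hamming_stabilizer k 2 (hamming_vertices k 2)" for \<sigma>
    using that folded_cube_induced_automorphism by (simp add: hamming_stabilizer_def)
  show "\<sigma> ` fold_class x = fold_class (\<sigma> x)"
    if "\<sigma> \<in> hamming_stabilizer k 2 (hamming_vertices k 2)" "x \<in> hamming_vertices k 2" for \<sigma> x
    using that by (intro image_fold_class) (simp_all add: hamming_stabilizer_def)
qed

section \<open>The halved folded cube\<close>

lemma weight_complement:
  assumes x: "x \<in> hamming_vertices k 2"
  shows "weight (complement x) = k - weight x"
proof -
  have len: "length x = k" using x by (simp add: hamming_vertices_iff)
  have "{i. i < length (complement x) \<and> complement x ! i = 1} = {..<k} - {i. i < k \<and> x ! i = 1}"
    using cube_coord[OF x] len by force
  then have "weight (complement x) = card ({..<k} - {i. i < k \<and> x ! i = 1})"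
    by (simp add: weight_def)
  also have "\<dots> = k - weight x"
    using len card_Diff_subset[of "{i. i < k \<and> x ! i = 1}" "{..<k}"] by (auto simp: weight_def)
  finally show ?thesis .
qed

lemma complement_in_halved_cube:
  assumes "even k" "x \<in> halved_cube_vertices k"
  shows "complement x \<in> halved_cube_vertices k"
proof -
  have x: "x \<in> hamming_vertices k 2" "even (weight x)"
    using assms(2) by (simp_all add: halved_cube_vertices_def)
  moreover have "weight x \<le> k"
    using x(1) card_mono[of "{..<k}" "{i. i < k \<and> x ! i = 1}"]
    by (auto simp: weight_def hamming_vertices_iff)
  ultimately show ?thesis
    using assms(1) weight_complement complement_in_cube by (simp add: halved_cube_vertices_def)
qed

lemma halved_folded_cube_vertices_eq:
  "halved_folded_cube_vertices k = fold_class ` halved_cube_vertices k"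
proof
  show "halved_folded_cube_vertices k \<subseteq> fold_class ` halved_cube_vertices k"
  proof
    fix A assume "A \<in> halved_folded_cube_vertices k"
    then obtain x0 x where "x0 \<in> hamming_vertices k 2" "A = fold_class x0" "x \<in> A" "even (weight x)"
      unfolding halved_folded_cube_vertices_def folded_cube_vertices_def by blast
    then have "x \<in> halved_cube_vertices k" "A = fold_class x"
      using fold_class_eq[of x0 k x] by (auto simp: halved_cube_vertices_def)
    then show "A \<in> fold_class ` halved_cube_vertices k" by blast
  qed
next
  show "fold_class ` halved_cube_vertices k \<subseteq> halved_folded_cube_vertices k"
  proof
    fix A assume "A \<in> fold_class ` halved_cube_vertices k"
    then obtain x where "x \<in> halved_cube_vertices k" "A = fold_class x" by blast
    then show "A \<in> halved_folded_cube_vertices k"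
      using fold_class_self[of x]
      unfolding halved_folded_cube_vertices_def folded_cube_vertices_def halved_cube_vertices_def
      by blast
  qed
qed

lemma fold_class_halved_cube_eq:
  assumes "even k" "x \<in> halved_cube_vertices k" "y \<in> fold_class x"
  shows "y \<in> halved_cube_vertices k \<and> fold_class y = fold_class x"
proof
  have "y = x \<or> y = complement x" using assms(3) by (simp add: fold_class_def)
  then show "y \<in> halved_cube_vertices k" using assms(2) complement_in_halved_cube[OF assms(1)] by blast
  show "fold_class y = fold_class x"
    using fold_class_eq[OF halved_cube_in_cube[OF assms(2)] assms(3)] by blast
qed

lemma gdist_folded_cube_halved:
  assumes "even k" "x \<in> halved_cube_vertices k" "y \<in> halved_cube_vertices k"
  shows "\<exists>y'\<in>fold_class y. y' \<in> halved_cube_vertices k \<and>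
    hamming_dist x y' = gdist (folded_cube_vertices k) folded_cube_adj (fold_class x) (fold_class y)"
proof -
  interpret folded: graph_quotient "hamming_vertices k 2" hamming_adj "folded_cube_vertices k"
    folded_cube_adj fold_class
    by (rule graph_quotient_folded_cube)
  have cube: "x \<in> hamming_vertices k 2" "y \<in> hamming_vertices k 2"
    using assms(2,3) halved_cube_in_cube by auto
  obtain p where "walk (hamming_vertices k 2) hamming_adj p" "hd p = x" "last p = y"
    using hamming_walk_exists[OF cube] by blast
  then obtain y' where "y' \<in> fold_class y"
    "gdist (hamming_vertices k 2) hamming_adj x y' =
       gdist (folded_cube_vertices k) folded_cube_adj (fold_class x) (fold_class y)"
    using folded.gdist_quotient_attained by blast
  moreover have "y' \<in> halved_cube_vertices k"
    using fold_class_halved_cube_eq[OF assms(1,3)] calculation(1) by blast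
  ultimately show ?thesis using gdist_hamming[OF cube(1) halved_cube_in_cube] by auto
qed

lemma halved_cube_adj_project:
  assumes "even k" "u \<in> halved_cube_vertices k" "v \<in> halved_cube_vertices k" "halved_cube_adj k u v"
  shows "halved_folded_cube_adj k (fold_class u) (fold_class v) \<or> fold_class u = fold_class v"
proof -
  interpret folded: graph_quotient "hamming_vertices k 2" hamming_adj "folded_cube_vertices k"
    folded_cube_adj fold_class
    by (rule graph_quotient_folded_cube)
  have cube: "u \<in> hamming_vertices k 2" "v \<in> hamming_vertices k 2"
    using assms(2,3) halved_cube_in_cube by auto
  obtain v' where v': "v' \<in> fold_class v" "v' \<in> halved_cube_vertices k"
    "hamming_dist u v' = gdist (folded_cube_vertices k) folded_cube_adj (fold_class u) (fold_class v)"
    using gdist_folded_cube_halved[OF assms(1-3)] by blast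
  obtain p where "walk (hamming_vertices k 2) hamming_adj p" "hd p = u" "last p = v"
    using hamming_walk_exists[OF cube] by blast
  then have "hamming_dist u v' \<le> 2"
    using folded.gdist_project_le[of p u v] assms(4) v'(3) by (simp add: halved_cube_adj_def)
  moreover have "even (hamming_dist u v')"
    using even_hamming_dist_halved_cube assms(2) v'(2) by blast
  ultimately have "hamming_dist u v' = 0 \<or> hamming_dist u v' = 2" by presburger
  then show ?thesis
  proof
    assume "hamming_dist u v' = 0"
    then have "u = v'"
      using hamming_dist_eq_0_iff cube(1) halved_cube_in_cube[OF v'(2)]
      by (simp add: hamming_vertices_iff)
    then show ?thesis using fold_class_halved_cube_eq[OF assms(1,3) v'(1)] by simp
  qed (use v'(3) in \<open>simp add: halved_folded_cube_adj_def\<close>)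
qed

lemma graph_quotient_halved_folded_cube:
  assumes k: "even k"
  shows "graph_quotient (halved_cube_vertices k) (halved_cube_adj k)
    (halved_folded_cube_vertices k) (halved_folded_cube_adj k) fold_class"
proof
  show "x \<in> fold_class x" for x by (rule fold_class_self)
  show "halved_folded_cube_vertices k = fold_class ` halved_cube_vertices k"
    by (rule halved_folded_cube_vertices_eq)
  show "y \<in> halved_cube_vertices k \<and> fold_class y = fold_class x"
    if "x \<in> halved_cube_vertices k" "y \<in> fold_class x" for x y
    using k that by (rule fold_class_halved_cube_eq)
  show "halved_folded_cube_adj k (fold_class u) (fold_class v) \<or> fold_class u = fold_class v"
    if "u \<in> halved_cube_vertices k" "v \<in> halved_cube_vertices k" "halved_cube_adj k u v" for u v
    using k that by (rule halved_cube_adj_project)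
next
  fix x B assume x: "x \<in> halved_cube_vertices k" and B: "B \<in> halved_folded_cube_vertices k"
    and adj: "halved_folded_cube_adj k (fold_class x) B"
  obtain y where "y \<in> halved_cube_vertices k" "B = fold_class y"
    using B halved_folded_cube_vertices_eq by blast
  then obtain y' where "y' \<in> B" "y' \<in> halved_cube_vertices k"
    "hamming_dist x y' = gdist (folded_cube_vertices k) folded_cube_adj (fold_class x) B"
    using gdist_folded_cube_halved[OF k x] by blast
  moreover have "halved_cube_adj k x y' \<longleftrightarrow> hamming_dist x y' = 2"
    using halved_cube_adj_iff halved_cube_in_cube x calculation(2) by blast
  ultimately show "\<exists>y\<in>B. halved_cube_adj k x y"
    using adj by (auto simp: halved_folded_cube_adj_def)
qed

theorem geodesic_transitive_halved_folded_cube: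
  assumes "even k"
  shows "geodesic_transitive (halved_folded_cube_vertices k) (halved_folded_cube_adj k)"
proof (rule graph_quotient.geodesic_transitive_quotient[OF graph_quotient_halved_folded_cube[OF assms]])
  show "geodesic_transitive_by (hamming_stabilizer k 2 (halved_cube_vertices k))
      (halved_cube_vertices k) (halved_cube_adj k)"
    by (rule scaled_hamming_embedding.geodesic_transitive_by_stabilizer[OF
          scaled_hamming_embedding_halved_cube])
next
  fix \<sigma> assume "\<sigma> \<in> hamming_stabilizer k 2 (halved_cube_vertices k)"
  then have a: "graph_automorphism (hamming_vertices k 2) hamming_adj \<sigma>"
    and E: "\<sigma> ` halved_cube_vertices k = halved_cube_vertices k"
    by (simp_all add: hamming_stabilizer_def)
  have fold: "\<sigma> ` fold_class x = fold_class (\<sigma> x)" if "x \<in> halved_cube_vertices k" for x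
    using image_fold_class[OF a halved_cube_in_cube[OF that]] .
  then show "\<sigma> ` fold_class x = fold_class (\<sigma> x)" if "x \<in> halved_cube_vertices k" for x
    using that .
  have "image \<sigma> ` halved_folded_cube_vertices k = (\<lambda>x. \<sigma> ` fold_class x) ` halved_cube_vertices k"
    unfolding halved_folded_cube_vertices_eq image_image ..
  also have "\<dots> = fold_class ` \<sigma> ` halved_cube_vertices k"
    using fold by (simp add: image_image cong: image_cong)
  also have "\<dots> = halved_folded_cube_vertices k"
    using E halved_folded_cube_vertices_eq by simp
  finally have "image \<sigma> ` halved_folded_cube_vertices k = halved_folded_cube_vertices k" .
  moreover have "halved_folded_cube_vertices k \<subseteq> folded_cube_vertices k"
    by (auto simp: halved_folded_cube_vertices_def)
  ultimately have "graph_automorphism (halved_folded_cube_vertices k)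
      (\<lambda>A B. gdist (folded_cube_vertices k) folded_cube_adj A B = 2) (image \<sigma>)"
    by (intro graph_automorphism_gdist_graph[OF folded_cube_induced_automorphism[OF a]])
  then show "graph_automorphism (halved_folded_cube_vertices k) (halved_folded_cube_adj k) (image \<sigma>)"
    by (simp add: halved_folded_cube_adj_def[abs_def])
qed

theorem proposition3p7:
  fixes k m :: nat
  shows "(m \<ge> 2 \<longrightarrow> geodesic_transitive (hamming_vertices k m) hamming_adj)
       \<and> geodesic_transitive (halved_cube_vertices k) (halved_cube_adj k)
       \<and> geodesic_transitive (folded_cube_vertices k) folded_cube_adj
       \<and> (even k \<longrightarrow> geodesic_transitive (halved_folded_cube_vertices k) (halved_folded_cube_adj k))"
  using geodesic_transitive_hamming geodesic_transitive_halved_cube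
    geodesic_transitive_folded_cube geodesic_transitive_halved_folded_cube by blast

end
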